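(* For all $x,y\in\{5,6,7,8\}$ (not necessarily distinct) there is a snark $G$ with a Hist $T$ such that $oc(G,T)$ is the multiset $\{x,y\}$.
   Context: A snark is a cyclically $4$-edge-connected cubic (3-regular) graph of girth at least $5$ that admits no proper $3$-edge-colouring. A Hist of a cubic graph $G$ is a spanning tree $T$ of $G$ with no vertex of degree two (so every vertex of $T$ has degree $1$ or $3$). Given a Hist $T$ of a cubic graph $G$, the edges of $G$ not in $T$ form vertex-disjoint cycles whose vertices are exactly the leaves of $T$; these are the outer cycles of $(G,T)$. If $C_1,\dots,C_k$ are all outer cycles, $oc(G,T)$ denotes the multiset $\{|V(C_1)|,\dots,|V(C_k)|\}$ of their lengths. *)

theory Defs
  imports Main "HOL-Library.Multiset"
begin

definition simple_graph :: "'a set \<Rightarrow> 'a set set \<Rightarrow> bool" where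
  "simple_graph V E \<longleftrightarrow> finite V \<and>
     (\<forall>e\<in>E. \<exists>u v. e = {u, v} \<and> u \<noteq> v \<and> u \<in> V \<and> v \<in> V)"

definition degree :: "'a set set \<Rightarrow> 'a \<Rightarrow> nat" where
  "degree F v = card {e\<in>F. v \<in> e}"

definition cubic :: "'a set \<Rightarrow> 'a set set \<Rightarrow> bool" where
  "cubic V E \<longleftrightarrow> simple_graph V E \<and> (\<forall>v\<in>V. degree E v = 3)"

definition is_cycle :: "'a set set \<Rightarrow> 'a list \<Rightarrow> bool" where
  "is_cycle F vs \<longleftrightarrow> length vs \<ge> 3 \<and> distinct vs \<and>
     (\<forall>i < length vs. {vs ! i, vs ! ((i + 1) mod length vs)} \<in> F)"

definition girth_ge :: "'a set set \<Rightarrow> nat \<Rightarrow> bool" where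
  "girth_ge E k \<longleftrightarrow> (\<forall>vs. is_cycle E vs \<longrightarrow> length vs \<ge> k)"

definition cut_edges :: "'a set \<Rightarrow> 'a set set \<Rightarrow> 'a set \<Rightarrow> 'a set set" where
  "cut_edges V E X = {e\<in>E. \<exists>u\<in>X. \<exists>v\<in>V - X. e = {u, v}}"

definition cyclically_k_edge_connected :: "nat \<Rightarrow> 'a set \<Rightarrow> 'a set set \<Rightarrow> bool" where
  "cyclically_k_edge_connected k V E \<longleftrightarrow>
     (\<forall>X \<subseteq> V. card (cut_edges V E X) < k \<longrightarrow>
        \<not> ((\<exists>vs. is_cycle E vs \<and> set vs \<subseteq> X) \<and> (\<exists>vs. is_cycle E vs \<and> set vs \<subseteq> V - X)))"

definition three_edge_colourable :: "'a set set \<Rightarrow> bool" where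
  "three_edge_colourable E \<longleftrightarrow>
     (\<exists>c :: 'a set \<Rightarrow> nat. (\<forall>e\<in>E. c e < 3) \<and>
        (\<forall>e1\<in>E. \<forall>e2\<in>E. e1 \<noteq> e2 \<and> e1 \<inter> e2 \<noteq> {} \<longrightarrow> c e1 \<noteq> c e2))"

definition snark :: "'a set \<Rightarrow> 'a set set \<Rightarrow> bool" where
  "snark V E \<longleftrightarrow> cubic V E \<and> cyclically_k_edge_connected 4 V E \<and> girth_ge E 5 \<and>
     \<not> three_edge_colourable E"

definition adj_rel :: "'a set set \<Rightarrow> ('a \<times> 'a) set" where
  "adj_rel F = {(u, v). {u, v} \<in> F}"

definition reach :: "'a set set \<Rightarrow> 'a \<Rightarrow> 'a \<Rightarrow> bool" where
  "reach F u v \<longleftrightarrow> (u, v) \<in> (adj_rel F)\<^sup>*"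

definition spanning_tree :: "'a set \<Rightarrow> 'a set set \<Rightarrow> 'a set set \<Rightarrow> bool" where
  "spanning_tree V E T \<longleftrightarrow> T \<subseteq> E \<and> (\<forall>u\<in>V. \<forall>v\<in>V. reach T u v) \<and>
     \<not> (\<exists>vs. is_cycle T vs)"

definition hist :: "'a set \<Rightarrow> 'a set set \<Rightarrow> 'a set set \<Rightarrow> bool" where
  "hist V E T \<longleftrightarrow> spanning_tree V E T \<and> (\<forall>v\<in>V. degree T v = 1 \<or> degree T v = 3)"

definition leaves :: "'a set \<Rightarrow> 'a set set \<Rightarrow> 'a set" where
  "leaves V T = {v\<in>V. degree T v = 1}"

definition outer_cycles :: "'a set \<Rightarrow> 'a set set \<Rightarrow> 'a set set \<Rightarrow> 'a set set" where
  "outer_cycles V E T =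
     {{v\<in>leaves V T. reach (E - T) u v} | u. u \<in> leaves V T}"

definition oc :: "'a set \<Rightarrow> 'a set set \<Rightarrow> 'a set set \<Rightarrow> nat multiset" where
  "oc V E T = image_mset card (mset_set (outer_cycles V E T))"

end

theory Submission
  imports Defs "HOL-Library.Code_Target_Nat"
begin

text \<open>For each of the ten multisets an explicit snark on 18 to 30 vertices is given together
  with a Hist whose two outer cycles have the prescribed lengths. Every property is reduced to
  a certificate that is checked by evaluation: girth by listing the vertices within distance two;
  non-3-edge-colourability by exhaustive search after fixing the colours of the three edges at
  one vertex; the Hist by a parent pointer and a strictly increasing depth for each vertex; the
  outer cycles by listing them; and cyclic 4-edge-connectivity by four edge-disjoint paths from
  each of four fixed edges to every non-tree edge disjoint from it.\<close>

section \<open>Graphs given by edge lists\<close>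

definition edge_of :: "nat \<times> nat \<Rightarrow> nat set" where
  "edge_of p = {fst p, snd p}"

abbreviation edges_of :: "(nat \<times> nat) list \<Rightarrow> nat set set" where
  "edges_of es \<equiv> edge_of ` set es"

definition sort_pair :: "nat \<times> nat \<Rightarrow> nat \<times> nat" where
  "sort_pair p = (min (fst p) (snd p), max (fst p) (snd p))"

definition edge_list :: "nat \<Rightarrow> (nat \<times> nat) list \<Rightarrow> bool" where
  "edge_list n es \<longleftrightarrow> distinct es \<and> (\<forall>(u, v)\<in>set es. u < v \<and> v < n)"

definition neighbours :: "(nat \<times> nat) list \<Rightarrow> nat \<Rightarrow> nat list" where
  "neighbours es u =
     map (\<lambda>p. if fst p = u then snd p else fst p) (filter (\<lambda>p. u = fst p \<or> u = snd p) es)"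

lemma edge_of_sort_pair [simp]: "edge_of (sort_pair p) = edge_of p"
  by (auto simp: edge_of_def sort_pair_def min_def max_def)

lemma edge_listD: "edge_list n es \<Longrightarrow> (u, v) \<in> set es \<Longrightarrow> u < v \<and> v < n"
  by (auto simp: edge_list_def)

lemma edge_list_append: "edge_list n (xs @ ys) \<Longrightarrow> edge_list n xs \<and> edge_list n ys"
  by (simp add: edge_list_def)

lemma edge_of_eq_iff:
  "fst p < snd p \<Longrightarrow> fst q < snd q \<Longrightarrow> edge_of p = edge_of q \<longleftrightarrow> p = q"
  by (cases p; cases q) (auto simp: edge_of_def doubleton_eq_iff)

lemma inj_on_edge_of: "edge_list n es \<Longrightarrow> inj_on edge_of (set es)"
  by (rule inj_onI) (metis edge_of_eq_iff edge_listD prod.collapse)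

lemma mem_edges_ofE:
  assumes "edge_list n es" and "{u, v} \<in> edges_of es"
  obtains "u < v" "(u, v) \<in> set es" "v < n" | "v < u" "(v, u) \<in> set es" "u < n"
proof -
  from assms(2) obtain a b where ab: "(a, b) \<in> set es" "{u, v} = {a, b}"
    by (auto simp: edge_of_def)
  have lt: "a < b" "b < n"
    using edge_listD[OF assms(1) ab(1)] by auto
  from ab(2) have "u = a \<and> v = b \<or> u = b \<and> v = a"
    by (simp add: doubleton_eq_iff)
  then show thesis
  proof
    assume "u = a \<and> v = b"
    with ab(1) lt show thesis
      by (intro that(1)) auto
  next
    assume "u = b \<and> v = a"
    with ab(1) lt show thesis
      by (intro that(2)) auto
  qed
qed

lemma sort_pair_in_edges_of: "sort_pair (u, v) \<in> set es \<Longrightarrow> {u, v} \<in> edges_of es"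
  by (metis edge_of_sort_pair edge_of_def fst_conv snd_conv image_eqI)

lemma edges_of_bounded: "edge_list n es \<Longrightarrow> {u, v} \<in> edges_of es \<Longrightarrow> u < n \<and> v < n"
  by (erule mem_edges_ofE) auto

lemma mem_neighbours_iff:
  assumes "edge_list n es"
  shows "v \<in> set (neighbours es u) \<longleftrightarrow> {u, v} \<in> edges_of es"
proof
  assume "v \<in> set (neighbours es u)"
  then obtain p where p: "p \<in> set es" "u = fst p \<or> u = snd p"
    and v: "v = (if fst p = u then snd p else fst p)"
    unfolding neighbours_def set_map set_filter by blast
  from p(2) v have "{u, v} = edge_of p"
    by (cases "fst p = u") (simp_all add: edge_of_def insert_commute)
  with p(1) show "{u, v} \<in> edges_of es"
    by blast
next
  assume "{u, v} \<in> edges_of es"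
  then show "v \<in> set (neighbours es u)"
    unfolding neighbours_def set_map
  proof (rule mem_edges_ofE[OF assms])
    assume "(u, v) \<in> set es"
    then show "v \<in> (\<lambda>p. if fst p = u then snd p else fst p) ` set (filter (\<lambda>p. u = fst p \<or> u = snd p) es)"
      by (intro rev_image_eqI[of "(u, v)"]) auto
  next
    assume "v < u" "(v, u) \<in> set es"
    then show "v \<in> (\<lambda>p. if fst p = u then snd p else fst p) ` set (filter (\<lambda>p. u = fst p \<or> u = snd p) es)"
      by (intro rev_image_eqI[of "(v, u)"]) auto
  qed
qed

lemma degree_edges_of:
  assumes "edge_list n es"
  shows "degree (edges_of es) v = length (neighbours es v)"
proof -
  let ?incident = "filter (\<lambda>p. v = fst p \<or> v = snd p) es"
  have "{e \<in> edges_of es. v \<in> e} = edges_of ?incident"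
    by (auto simp: edge_of_def)
  moreover have "inj_on edge_of (set ?incident)"
    using inj_on_edge_of[OF assms] by (rule inj_on_subset) auto
  moreover have "card (set ?incident) = length ?incident"
    using assms by (intro distinct_card) (simp add: edge_list_def)
  ultimately show ?thesis
    unfolding degree_def neighbours_def length_map by (simp add: card_image)
qed

lemma cubic_edges_of:
  assumes "edge_list n es" and "\<forall>v\<in>set [0..<n]. length (neighbours es v) = 3"
  shows "cubic {0..<n} (edges_of es)"
  unfolding cubic_def simple_graph_def
proof (intro conjI ballI)
  fix e assume "e \<in> edges_of es"
  then obtain u v where "(u, v) \<in> set es" "e = {u, v}"
    by (auto simp: edge_of_def)
  with edge_listD[OF assms(1) this(1)]
  show "\<exists>u v. e = {u, v} \<and> u \<noteq> v \<and> u \<in> {0..<n} \<and> v \<in> {0..<n}"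
    by (intro exI[of _ u] exI[of _ v]) auto
qed (use assms in \<open>simp_all add: degree_edges_of\<close>)

section \<open>Girth\<close>

text \<open>Girth at least 5 means that the vertices within distance two of any vertex span a
  tree, so listing them along the walks that do not return to the start repeats none.\<close>

definition two_ball :: "(nat \<times> nat) list \<Rightarrow> nat \<Rightarrow> nat list" where
  "two_ball es a =
     a # neighbours es a @ concat (map (\<lambda>b. removeAll a (neighbours es b)) (neighbours es a))"

definition no_short_cycles :: "nat \<Rightarrow> (nat \<times> nat) list \<Rightarrow> bool" where
  "no_short_cycles n es \<longleftrightarrow> (\<forall>a\<in>set [0..<n]. distinct (two_ball es a))"

lemma disjoint_if_distinct_concat_map:
  "distinct (concat (map f xs)) \<Longrightarrow> distinct xs \<Longrightarrow> x \<in> set xs \<Longrightarrow> y \<in> set xs \<Longrightarrow> x \<noteq> y \<Longrightarrow>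
     set (f x) \<inter> set (f y) = {}"
  by (induction xs) auto

lemma no_short_cyclesD:
  assumes "no_short_cycles n es" "a < n" "b \<in> set (neighbours es a)"
    "c \<in> set (neighbours es b)" "c \<noteq> a"
  shows "c \<notin> set (neighbours es a)"
    and "d \<in> set (neighbours es a) \<Longrightarrow> d \<noteq> b \<Longrightarrow> c \<notin> set (neighbours es d)"
proof -
  let ?N = "neighbours es a" and ?f = "\<lambda>b. removeAll a (neighbours es b)"
  have "distinct (two_ball es a)"
    using assms(1,2) by (simp add: no_short_cycles_def)
  then have N: "distinct ?N" and disjoint: "set ?N \<inter> set (concat (map ?f ?N)) = {}"
    and blocks: "distinct (concat (map ?f ?N))"
    by (simp_all add: two_ball_def)
  have c: "c \<in> set (?f b)"
    using assms(4,5) by simp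
  with assms(3) disjoint show "c \<notin> set ?N"
    by auto
  assume "d \<in> set ?N" "d \<noteq> b"
  with disjoint_if_distinct_concat_map[OF blocks N assms(3)] c assms(5)
  show "c \<notin> set (neighbours es d)"
    by auto
qed

lemma girth_ge_5I:
  assumes es: "edge_list n es" and short: "no_short_cycles n es"
  shows "girth_ge (edges_of es) 5"
  unfolding girth_ge_def
proof (intro allI impI)
  fix vs assume cyc: "is_cycle (edges_of es) vs"
  have step: "vs ! ((i + 1) mod length vs) \<in> set (neighbours es (vs ! i))" if "i < length vs" for i
    using cyc that by (simp add: is_cycle_def mem_neighbours_iff[OF es])
  have distinct_nth: "vs ! i \<noteq> vs ! j" if "i < length vs" "j < length vs" "i \<noteq> j" for i j
    using cyc that by (simp add: is_cycle_def nth_eq_iff_index_eq)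
  have len: "3 \<le> length vs"
    using cyc by (simp add: is_cycle_def)
  then have "vs \<noteq> []"
    by auto
  have path: "vs ! 1 \<in> set (neighbours es (vs ! 0))" "vs ! 2 \<in> set (neighbours es (vs ! 1))"
    "vs ! 2 \<noteq> vs ! 0"
    using step[of 0] step[of 1] distinct_nth[of 2 0] len \<open>vs \<noteq> []\<close>
    by (auto simp: numeral_2_eq_2)
  moreover have "vs ! 0 < n"
    using path(1) by (metis mem_neighbours_iff[OF es] edges_of_bounded[OF es])
  ultimately have no_triangle: "vs ! 2 \<notin> set (neighbours es (vs ! 0))"
    and no_square: "\<And>d. d \<in> set (neighbours es (vs ! 0)) \<Longrightarrow> d \<noteq> vs ! 1 \<Longrightarrow>
      vs ! 2 \<notin> set (neighbours es d)"
    using no_short_cyclesD[OF short] by blast+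
  have sym: "u \<in> set (neighbours es v)" if "v \<in> set (neighbours es u)" for u v
    using that by (simp add: mem_neighbours_iff[OF es] insert_commute)
  show "5 \<le> length vs"
  proof (rule ccontr)
    assume "\<not> 5 \<le> length vs"
    with len have "length vs = 3 \<or> length vs = 4"
      by auto
    then show False
    proof
      assume "length vs = 3"
      then have "vs ! 0 \<in> set (neighbours es (vs ! 2))"
        using step[of 2] by simp
      with no_triangle sym show False
        by blast
    next
      assume "length vs = 4"
      then have "vs ! 3 \<in> set (neighbours es (vs ! 2))" "vs ! 0 \<in> set (neighbours es (vs ! 3))"
        "vs ! 3 \<noteq> vs ! 1"
        using step[of 2] step[of 3] distinct_nth[of 3 1] by simp_all
      with no_square sym show False
        by blast
    qed
  qed
qed

section \<open>Edge colourings\<close>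

definition adjacent :: "nat \<times> nat \<Rightarrow> nat \<times> nat \<Rightarrow> bool" where
  "adjacent e f \<longleftrightarrow> e \<noteq> f \<and> (fst e = fst f \<or> fst e = snd f \<or> snd e = fst f \<or> snd e = snd f)"

lemma adjacent_iff:
  assumes "edge_list n es" "e \<in> set es" "f \<in> set es"
  shows "adjacent e f \<longleftrightarrow> edge_of e \<noteq> edge_of f \<and> edge_of e \<inter> edge_of f \<noteq> {}"
  using inj_on_edge_of[OF assms(1)] assms(2,3)
  by (auto simp: adjacent_def edge_of_def inj_on_def)

fun colouring_extends :: "(nat \<times> nat) list \<Rightarrow> ((nat \<times> nat) \<times> nat) list \<Rightarrow> bool" where
  "colouring_extends [] col \<longleftrightarrow> True"
| "colouring_extends (e # rest) col \<longleftrightarrow>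
     (\<exists>c\<in>{0, 1, 2}. (\<forall>(f, d)\<in>set col. adjacent e f \<longrightarrow> d \<noteq> c) \<and>
        colouring_extends rest ((e, c) # col))"

lemma colouring_extends_if_proper:
  assumes es: "edge_list n es"
    and range: "\<forall>e\<in>edges_of es. c e < 3"
    and proper: "\<forall>e1\<in>edges_of es. \<forall>e2\<in>edges_of es. e1 \<noteq> e2 \<and> e1 \<inter> e2 \<noteq> {} \<longrightarrow> c e1 \<noteq> c e2"
  shows "set rest \<subseteq> set es \<Longrightarrow> \<forall>(f, d)\<in>set col. f \<in> set es \<and> d = c (edge_of f) \<Longrightarrow>
    colouring_extends rest col"
proof (induction rest arbitrary: col)
  case Nil
  then show ?case by simp
next
  case (Cons e rest)
  then have e: "e \<in> set es"
    by simp
  have "c (edge_of e) \<in> {0, 1, 2}"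
    using range e by fastforce
  moreover have "\<forall>(f, d)\<in>set col. adjacent e f \<longrightarrow> d \<noteq> c (edge_of e)"
    using Cons.prems(2) proper e by (fastforce simp: adjacent_iff[OF es])
  moreover have "colouring_extends rest ((e, c (edge_of e)) # col)"
    using Cons.prems e by (intro Cons.IH) auto
  ultimately show ?case
    by (simp only: colouring_extends.simps) blast
qed

fun forces_uncolourable :: "(nat \<times> nat) list \<Rightarrow> bool" where
  "forces_uncolourable (e1 # e2 # e3 # rest) \<longleftrightarrow>
     adjacent e1 e2 \<and> adjacent e1 e3 \<and> adjacent e2 e3 \<and>
     \<not> colouring_extends rest [(e1, 0), (e2, 1), (e3, 2)]"
| "forces_uncolourable _ \<longleftrightarrow> False"

lemma not_three_edge_colourableI:
  assumes es: "edge_list n es" and order: "set order \<subseteq> set es"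
    and forces: "forces_uncolourable order"
  shows "\<not> three_edge_colourable (edges_of es)"
proof
  assume "three_edge_colourable (edges_of es)"
  then obtain c :: "nat set \<Rightarrow> nat" where "(\<forall>e\<in>edges_of es. c e < 3) \<and>
      (\<forall>e1\<in>edges_of es. \<forall>e2\<in>edges_of es. e1 \<noteq> e2 \<and> e1 \<inter> e2 \<noteq> {} \<longrightarrow> c e1 \<noteq> c e2)"
    unfolding three_edge_colourable_def ..
  then have range: "\<forall>e\<in>edges_of es. c e < 3"
    and proper: "\<forall>e1\<in>edges_of es. \<forall>e2\<in>edges_of es. e1 \<noteq> e2 \<and> e1 \<inter> e2 \<noteq> {} \<longrightarrow> c e1 \<noteq> c e2"
    by (rule conjunct1, rule conjunct2)
  from forces obtain e1 e2 e3 rest where order_eq: "order = e1 # e2 # e3 # rest"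
    and adj: "adjacent e1 e2" "adjacent e1 e3" "adjacent e2 e3"
    and stuck: "\<not> colouring_extends rest [(e1, 0), (e2, 1), (e3, 2)]"
    by (cases order rule: forces_uncolourable.cases) auto
  have in_es: "e1 \<in> set es" "e2 \<in> set es" "e3 \<in> set es" "set rest \<subseteq> set es"
    using order order_eq by auto
  define a1 a2 a3 where "a1 = c (edge_of e1)" "a2 = c (edge_of e2)" "a3 = c (edge_of e3)"
  have a_range: "a1 < 3" "a2 < 3" "a3 < 3"
    using range in_es unfolding a1_a2_a3_def by auto
  have "c (edge_of e) \<noteq> c (edge_of f)" if "adjacent e f" "e \<in> set es" "f \<in> set es" for e f
    using proper that by (simp add: adjacent_iff[OF es])
  with adj in_es have a_distinct: "a1 \<noteq> a2" "a1 \<noteq> a3" "a2 \<noteq> a3"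
    unfolding a1_a2_a3_def by blast+
  \<comment> \<open>Renaming the colours so that e1, e2, e3 receive 0, 1, 2 gives another proper colouring.\<close>
  define rename :: "nat \<Rightarrow> nat" where "rename z = (if z = a1 then 0 else if z = a2 then 1 else 2)" for z
  have cover: "z = a1 \<or> z = a2 \<or> z = a3" if "z < 3" for z
    using that a_range a_distinct by arith
  have rename_inj: "rename z \<noteq> rename z'" if "z < 3" "z' < 3" "z \<noteq> z'" for z z'
    using cover[OF that(1)] cover[OF that(2)] that(3) a_distinct unfolding rename_def by auto
  have "colouring_extends rest [(e1, 0), (e2, 1), (e3, 2)]"
  proof (rule colouring_extends_if_proper[OF es, where c = "rename \<circ> c"])
    show "\<forall>e\<in>edges_of es. (rename \<circ> c) e < 3"
      by (simp add: rename_def)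
    show "\<forall>e1\<in>edges_of es. \<forall>e2\<in>edges_of es. e1 \<noteq> e2 \<and> e1 \<inter> e2 \<noteq> {} \<longrightarrow>
        (rename \<circ> c) e1 \<noteq> (rename \<circ> c) e2"
      using proper range rename_inj by simp
    show "\<forall>(f, d)\<in>set [(e1, 0), (e2, 1), (e3, 2)]. f \<in> set es \<and> d = (rename \<circ> c) (edge_of f)"
      using in_es a_distinct unfolding rename_def a1_a2_a3_def by auto
  qed (use in_es in simp)
  with stuck show False ..
qed

section \<open>Cyclic edge-connectivity\<close>

lemma mem_cut_edgesI:
  assumes "{u, v} \<in> E" "u \<in> V" "v \<in> V" "(u \<in> X) \<noteq> (v \<in> X)"
  shows "{u, v} \<in> cut_edges V E X"
proof (cases "u \<in> X")
  case True
  with assms show ?thesis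
    unfolding cut_edges_def by blast
next
  case False
  with assms have "{v, u} \<in> E" "v \<in> X" "u \<in> V - X"
    by (auto simp: insert_commute)
  then show ?thesis
    unfolding cut_edges_def by (auto simp: insert_commute)
qed

lemma cut_edges_Diff: "X \<subseteq> V \<Longrightarrow> cut_edges V E (V - X) = cut_edges V E X"
  unfolding cut_edges_def by (auto simp: double_diff insert_commute)

definition path_edges :: "nat list \<Rightarrow> (nat \<times> nat) list" where
  "path_edges p = map sort_pair (zip p (tl p))"

lemma path_edges_Cons_Cons [simp]:
  "path_edges (u # v # p) = sort_pair (u, v) # path_edges (v # p)"
  by (simp add: path_edges_def)

lemma path_crosses:
  "p \<noteq> [] \<Longrightarrow> (hd p \<in> X) \<noteq> (last p \<in> X) \<Longrightarrow>
     \<exists>(u, v)\<in>set (zip p (tl p)). (u \<in> X) \<noteq> (v \<in> X)"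
proof (induction p rule: induct_list012)
  case (3 u v p)
  then show ?case
    by (cases "(u \<in> X) = (v \<in> X)") auto
qed auto

lemma path_crosses_cut_edges:
  assumes es: "edge_list n es" and "p \<noteq> []" and "set (path_edges p) \<subseteq> set es"
    and "(hd p \<in> X) \<noteq> (last p \<in> X)"
  shows "\<exists>g\<in>set (path_edges p). edge_of g \<in> cut_edges {0..<n} (edges_of es) X"
proof -
  obtain u v where uv: "(u, v) \<in> set (zip p (tl p))" "(u \<in> X) \<noteq> (v \<in> X)"
    using path_crosses[OF assms(2,4)] by blast
  then have g: "sort_pair (u, v) \<in> set (path_edges p)"
    unfolding path_edges_def by force
  with assms(3) have "{u, v} \<in> edges_of es"
    by (metis edge_of_sort_pair edge_of_def fst_conv snd_conv image_eqI subsetD)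
  with uv(2) es have "{u, v} \<in> cut_edges {0..<n} (edges_of es) X"
    by (intro mem_cut_edgesI) (auto dest: edges_of_bounded)
  with g show ?thesis
    by (metis edge_of_sort_pair edge_of_def fst_conv snd_conv)
qed

lemma length_le_filter_concat:
  "\<forall>xs\<in>set xss. \<exists>x\<in>set xs. P x \<Longrightarrow> length xss \<le> length (filter P (concat xss))"
proof (induction xss)
  case (Cons xs xss)
  then have "filter P xs \<noteq> []"
    by (simp add: filter_empty_conv)
  then have "1 \<le> length (filter P xs)"
    by (cases "filter P xs") auto
  with Cons show ?case
    by simp
qed simp

text \<open>The easy direction of Menger's theorem: edge-disjoint paths crossing a cut use
  distinct cut edges.\<close>

lemma length_le_card_cut_edges:
  assumes es: "edge_list n es" and disjoint: "distinct (concat (map path_edges ps))"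
    and paths: "\<forall>p\<in>set ps. p \<noteq> [] \<and> set (path_edges p) \<subseteq> set es \<and> (hd p \<in> X) \<noteq> (last p \<in> X)"
  shows "length ps \<le> card (cut_edges {0..<n} (edges_of es) X)"
proof -
  let ?cut = "cut_edges {0..<n} (edges_of es) X"
  let ?crossing = "filter (\<lambda>g. edge_of g \<in> ?cut) (concat (map path_edges ps))"
  have "length ps \<le> length ?crossing"
    using length_le_filter_concat[of "map path_edges ps"] path_crosses_cut_edges[OF es] paths
    by simp
  also have "\<dots> = card (edge_of ` set ?crossing)"
  proof -
    have "set ?crossing \<subseteq> set es"
      using paths by auto
    then have "inj_on edge_of (set ?crossing)"
      using inj_on_edge_of[OF es] by (rule inj_on_subset[rotated])
    moreover have "card (set ?crossing) = length ?crossing"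
      using disjoint by (intro distinct_card) simp
    ultimately show ?thesis
      by (simp only: card_image)
  qed
  also have "\<dots> \<le> card ?cut"
    by (rule card_mono) (auto simp: cut_edges_def)
  finally show ?thesis .
qed

definition edge_disjoint_paths :: "(nat \<times> nat) list \<Rightarrow> nat \<times> nat \<Rightarrow> nat \<times> nat \<Rightarrow> nat list list \<Rightarrow> bool" where
  "edge_disjoint_paths es s f ps \<longleftrightarrow> distinct (concat (map path_edges ps)) \<and>
     (\<forall>p\<in>set ps. p \<noteq> [] \<and> hd p \<in> edge_of s \<and> last p \<in> edge_of f \<and> set (path_edges p) \<subseteq> set es)"

text \<open>If every cycle has an edge in fs, a cut of at most three edges cannot separate
  two cycles: some s keeps both ends on one side, and its paths to an fs-edge of a cycle on the
  other side all cross the cut.\<close>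

definition linkage_certificate ::
    "(nat \<times> nat) list \<Rightarrow> (nat \<times> nat) list \<Rightarrow> ((nat \<times> nat) \<times> ((nat \<times> nat) \<times> nat list list) list) list \<Rightarrow> bool" where
  "linkage_certificate es fs cert \<longleftrightarrow> length cert = 4 \<and> distinct (map fst cert) \<and>
     (\<forall>(s, links)\<in>set cert. s \<in> set es \<and>
        (\<forall>f\<in>set fs. edge_of s \<inter> edge_of f = {} \<longrightarrow> f \<in> fst ` set links) \<and>
        (\<forall>(f, ps)\<in>set links. length ps = 4 \<and> edge_disjoint_paths es s f ps))"

lemma linkage_certificateD:
  assumes "linkage_certificate es fs cert"
  shows "length cert = 4" and "distinct (map fst cert)"
    and "(s, links) \<in> set cert \<Longrightarrow> s \<in> set es"
    and "(s, links) \<in> set cert \<Longrightarrow> f \<in> set fs \<Longrightarrow> edge_of s \<inter> edge_of f = {} \<Longrightarrow>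
      \<exists>ps. (f, ps) \<in> set links \<and> length ps = 4 \<and> edge_disjoint_paths es s f ps"
proof -
  from assms show "length cert = 4" "distinct (map fst cert)"
    by (simp_all add: linkage_certificate_def)
  assume s: "(s, links) \<in> set cert"
  with assms have "s \<in> set es \<and>
      (\<forall>f\<in>set fs. edge_of s \<inter> edge_of f = {} \<longrightarrow> f \<in> fst ` set links) \<and>
      (\<forall>(f, ps)\<in>set links. length ps = 4 \<and> edge_disjoint_paths es s f ps)"
    unfolding linkage_certificate_def by fastforce
  then show "s \<in> set es"
    by blast
  assume "f \<in> set fs" "edge_of s \<inter> edge_of f = {}"
  then show "\<exists>ps. (f, ps) \<in> set links \<and> length ps = 4 \<and> edge_disjoint_paths es s f ps"
    using \<open>s \<in> set es \<and> _\<close> by fastforce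
qed

lemma four_le_card_cut_edges:
  assumes es: "edge_list n es" and cert: "linkage_certificate es fs cert"
    and hits: "\<And>vs. is_cycle (edges_of es) vs \<Longrightarrow>
      \<exists>i<length vs. {vs ! i, vs ! ((i + 1) mod length vs)} \<in> edges_of fs"
    and s: "(s, links) \<in> set cert" "edge_of s \<subseteq> X"
    and cyc: "is_cycle (edges_of es) vs" "set vs \<subseteq> {0..<n} - X"
  shows "4 \<le> card (cut_edges {0..<n} (edges_of es) X)"
proof -
  obtain i where i: "i < length vs" "{vs ! i, vs ! ((i + 1) mod length vs)} \<in> edges_of fs"
    using hits[OF cyc(1)] by blast
  then obtain f where f: "f \<in> set fs" "edge_of f = {vs ! i, vs ! ((i + 1) mod length vs)}"
    by auto
  have "(i + 1) mod length vs < length vs"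
    using i(1) by (intro mod_less_divisor) auto
  with i(1) have "vs ! i \<in> set vs" "vs ! ((i + 1) mod length vs) \<in> set vs"
    by (simp_all only: nth_mem)
  with f(2) cyc(2) have f_outside: "edge_of f \<inter> X = {}"
    by auto
  with s(2) have "edge_of s \<inter> edge_of f = {}"
    by blast
  then obtain ps where ps: "length ps = 4" "edge_disjoint_paths es s f ps"
    using linkage_certificateD(4)[OF cert s(1) f(1)] by blast
  have "length ps \<le> card (cut_edges {0..<n} (edges_of es) X)"
  proof (rule length_le_card_cut_edges[OF es])
    show "distinct (concat (map path_edges ps))"
      using ps(2) by (simp add: edge_disjoint_paths_def)
    show "\<forall>p\<in>set ps. p \<noteq> [] \<and> set (path_edges p) \<subseteq> set es \<and> (hd p \<in> X) \<noteq> (last p \<in> X)"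
      using ps(2) s(2) f_outside unfolding edge_disjoint_paths_def by blast
  qed
  with ps(1) show ?thesis
    by simp
qed

lemma uncut_linkage_edge:
  assumes es: "edge_list n es" and cert: "linkage_certificate es fs cert"
    and small: "card (cut_edges {0..<n} (edges_of es) X) < 4"
  obtains s links where "(s, links) \<in> set cert" "edge_of s \<subseteq> X \<or> edge_of s \<subseteq> {0..<n} - X"
proof -
  let ?cut = "cut_edges {0..<n} (edges_of es) X"
  have S: "set (map fst cert) \<subseteq> set es" "distinct (map fst cert)" "length (map fst cert) = 4"
    using linkage_certificateD(1-3)[OF cert] by auto
  have "card (edge_of ` set (map fst cert)) = card (set (map fst cert))"
    using inj_on_subset[OF inj_on_edge_of[OF es] S(1)] by (rule card_image)
  also have "\<dots> = 4"
    using distinct_card[OF S(2)] S(3) by simp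
  finally have card_S: "card (edge_of ` set (map fst cert)) = 4" .
  have "\<not> edge_of ` set (map fst cert) \<subseteq> ?cut"
  proof
    assume "edge_of ` set (map fst cert) \<subseteq> ?cut"
    with card_mono[of ?cut] have "card (edge_of ` set (map fst cert)) \<le> card ?cut"
      by (simp add: cut_edges_def)
    with card_S small show False
      by simp
  qed
  then obtain s where s: "s \<in> set (map fst cert)" "edge_of s \<notin> ?cut"
    by blast
  then obtain links where links: "(s, links) \<in> set cert"
    by auto
  obtain a b where ab: "s = (a, b)" "(a, b) \<in> set es"
    using S(1) s(1) by (cases s) auto
  then have bounded: "a < n" "b < n"
    using edge_listD[OF es, of a b] by auto
  have "{a, b} \<in> edges_of es"
    using ab(2) by (metis edge_of_def fst_conv snd_conv image_eqI)
  with bounded s(2) ab(1) have "(a \<in> X) = (b \<in> X)"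
    using mem_cut_edgesI[of a b "edges_of es" "{0..<n}" X] by (auto simp: edge_of_def)
  with ab(1) bounded have "edge_of s \<subseteq> X \<or> edge_of s \<subseteq> {0..<n} - X"
    by (auto simp: edge_of_def)
  with links show thesis
    by (rule that)
qed

lemma cyclically_4_edge_connectedI:
  assumes es: "edge_list n es" and cert: "linkage_certificate es fs cert"
    and hits: "\<And>vs. is_cycle (edges_of es) vs \<Longrightarrow>
      \<exists>i<length vs. {vs ! i, vs ! ((i + 1) mod length vs)} \<in> edges_of fs"
  shows "cyclically_k_edge_connected 4 {0..<n} (edges_of es)"
  unfolding cyclically_k_edge_connected_def
proof (intro allI impI notI)
  fix X assume X: "X \<subseteq> {0..<n}"
    and small: "card (cut_edges {0..<n} (edges_of es) X) < 4"
    and "(\<exists>vs. is_cycle (edges_of es) vs \<and> set vs \<subseteq> X) \<and>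
      (\<exists>vs. is_cycle (edges_of es) vs \<and> set vs \<subseteq> {0..<n} - X)"
  then obtain vs1 vs2 where cyc1: "is_cycle (edges_of es) vs1" "set vs1 \<subseteq> X"
    and cyc2: "is_cycle (edges_of es) vs2" "set vs2 \<subseteq> {0..<n} - X"
    by blast
  from cyc1(2) X have cyc1': "set vs1 \<subseteq> {0..<n} - ({0..<n} - X)"
    by blast
  obtain s links where links: "(s, links) \<in> set cert"
    and side: "edge_of s \<subseteq> X \<or> edge_of s \<subseteq> {0..<n} - X"
    using uncut_linkage_edge[OF es cert small] .
  from side show False
  proof
    assume "edge_of s \<subseteq> X"
    from four_le_card_cut_edges[OF es cert hits links this cyc2] small show False
      by simp
  next
    assume "edge_of s \<subseteq> {0..<n} - X"
    from four_le_card_cut_edges[OF es cert hits links this cyc1(1) cyc1'] small show False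
      by (simp add: cut_edges_Diff[OF X])
  qed
qed

section \<open>Spanning trees and Hists\<close>

lemma reach_refl [simp]: "reach F u u"
  by (simp add: reach_def)

lemma reach_sym: "reach F u v \<Longrightarrow> reach F v u"
proof -
  have "sym (adj_rel F)"
    by (auto simp: sym_def adj_rel_def insert_commute)
  then show "reach F u v \<Longrightarrow> reach F v u"
    unfolding reach_def by (meson sym_rtrancl symD)
qed

lemma reach_trans: "reach F u v \<Longrightarrow> reach F v w \<Longrightarrow> reach F u w"
  unfolding reach_def by (rule rtrancl_trans)

lemma reach_edge: "reach F u v \<Longrightarrow> {v, w} \<in> F \<Longrightarrow> reach F u w"
  unfolding reach_def by (rule rtrancl_into_rtrancl) (simp_all add: adj_rel_def)

definition parent_certificate :: "nat \<Rightarrow> (nat \<times> nat) list \<Rightarrow> nat list \<Rightarrow> nat list \<Rightarrow> bool" where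
  "parent_certificate n ts parent depth \<longleftrightarrow>
     (\<forall>(u, v)\<in>set ts. parent ! v = u \<and> depth ! u < depth ! v \<or> parent ! u = v \<and> depth ! v < depth ! u) \<and>
     (\<forall>v\<in>set [1..<n]. sort_pair (v, parent ! v) \<in> set ts \<and> depth ! (parent ! v) < depth ! v)"

lemma reach_root:
  assumes ts: "edge_list n ts" and cert: "parent_certificate n ts parent depth"
  shows "v < n \<Longrightarrow> reach (edges_of ts) v 0"
proof (induction "depth ! v" arbitrary: v rule: less_induct)
  case less
  show ?case
  proof (cases "v = 0")
    case True
    then show ?thesis
      by simp
  next
    case False
    with less.prems cert have edge: "sort_pair (v, parent ! v) \<in> set ts"
      and deeper: "depth ! (parent ! v) < depth ! v"
      by (auto simp: parent_certificate_def)
    from edge have "{v, parent ! v} \<in> edges_of ts"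
      by (rule sort_pair_in_edges_of)
    moreover have "reach (edges_of ts) (parent ! v) 0"
      using less.hyps[OF deeper] edges_of_bounded[OF ts \<open>{v, parent ! v} \<in> edges_of ts\<close>] by simp
    ultimately show ?thesis
      by (metis reach_edge reach_refl reach_trans)
  qed
qed

lemma tree_edge_parent:
  assumes "parent_certificate n ts parent depth" and "{x, y} \<in> edges_of ts"
  shows "parent ! y = x \<and> depth ! x < depth ! y \<or> parent ! x = y \<and> depth ! y < depth ! x"
proof -
  from assms(2) obtain u v where "(u, v) \<in> set ts" "{x, y} = {u, v}"
    by (auto simp: edge_of_def)
  with assms(1) show ?thesis
    unfolding parent_certificate_def doubleton_eq_iff by fastforce
qed

text \<open>A deepest vertex of a cycle would have both of its (distinct) cycle neighbours as
  parent.\<close>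

lemma no_cycle_if_parent_certificate:
  assumes cert: "parent_certificate n ts parent depth"
  shows "\<not> is_cycle (edges_of ts) vs"
proof
  assume cyc: "is_cycle (edges_of ts) vs"
  define L where "L = length vs"
  have L: "3 \<le> L" and dist: "distinct vs"
    and edge: "\<And>i. i < L \<Longrightarrow> {vs ! i, vs ! ((i + 1) mod L)} \<in> edges_of ts"
    using cyc unfolding L_def is_cycle_def by auto
  let ?depths = "(\<lambda>j. depth ! (vs ! j)) ` {..<L}"
  have "Max ?depths \<in> ?depths"
    using L by (intro Max_in) (auto simp: lessThan_empty_iff)
  then obtain i where i: "i < L" and max: "depth ! (vs ! i) = Max ?depths"
    by auto
  have deepest: "depth ! (vs ! j) \<le> depth ! (vs ! i)" if "j < L" for j
    unfolding max using that by (intro Max_ge) auto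
  define next_i prev_i where "next_i = (if i + 1 = L then 0 else i + 1)"
    and "prev_i = (if i = 0 then L - 1 else i - 1)"
  have idx: "next_i < L" "prev_i < L" "(i + 1) mod L = next_i" "(prev_i + 1) mod L = i"
    "next_i \<noteq> prev_i"
    using i L unfolding next_i_def prev_i_def by auto
  have "parent ! (vs ! i) = vs ! next_i"
    using tree_edge_parent[OF cert edge[OF i]] deepest[OF idx(1)] idx(3) by auto
  moreover have "parent ! (vs ! i) = vs ! prev_i"
    using tree_edge_parent[OF cert edge[OF idx(2)]] deepest[OF idx(2)] idx(4) by auto
  ultimately show False
    using dist idx(1,2,5) unfolding L_def by (simp add: nth_eq_iff_index_eq)
qed

lemma hist_if_parent_certificate:
  assumes es: "edge_list n (ts @ os)" and cert: "parent_certificate n ts parent depth"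
    and deg: "\<forall>v\<in>set [0..<n]. length (neighbours ts v) \<in> {1, 3}"
  shows "hist {0..<n} (edges_of (ts @ os)) (edges_of ts)"
proof -
  have ts: "edge_list n ts"
    using edge_list_append[OF es] by simp
  have "reach (edges_of ts) u v" if "u < n" "v < n" for u v
    using reach_root[OF ts cert that(1)] reach_root[OF ts cert that(2)] by (metis reach_sym reach_trans)
  then have "spanning_tree {0..<n} (edges_of (ts @ os)) (edges_of ts)"
    using no_cycle_if_parent_certificate[OF cert] by (auto simp: spanning_tree_def)
  with deg show ?thesis
    by (auto simp: hist_def degree_edges_of[OF ts])
qed

lemma cycle_meets_cotree:
  assumes cert: "parent_certificate n ts parent depth" and cyc: "is_cycle (edges_of (ts @ os)) vs"
  shows "\<exists>i<length vs. {vs ! i, vs ! ((i + 1) mod length vs)} \<in> edges_of os"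
proof (rule ccontr)
  assume no_cotree_edge: "\<not> ?thesis"
  have "{vs ! i, vs ! ((i + 1) mod length vs)} \<in> edges_of ts" if "i < length vs" for i
    using cyc no_cotree_edge that by (auto simp: is_cycle_def image_Un)
  with cyc have "is_cycle (edges_of ts) vs"
    by (simp add: is_cycle_def)
  with no_cycle_if_parent_certificate[OF cert] show False ..
qed

section \<open>Outer cycles\<close>

lemma reach_along_path:
  assumes "set (path_edges p) \<subseteq> set os" "u \<in> set p" "v \<in> set p"
  shows "reach (edges_of os) u v"
proof -
  have "reach (edges_of os) (hd p) v" if "set (path_edges p) \<subseteq> set os" "v \<in> set p" for p v
    using that
  proof (induction p arbitrary: v rule: induct_list012)
    case (3 a b p)
    have "reach (edges_of os) a b"
      using 3(3) reach_edge[OF reach_refl sort_pair_in_edges_of] by simp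
    moreover have "set (path_edges (b # p)) \<subseteq> set os"
      using 3(3) by simp
    ultimately have "reach (edges_of os) a w" if "w \<in> set (b # p)" for w
      using "3.IH"(2)[OF _ that] reach_trans by fastforce
    with 3(4) show ?case
      by (cases "v = a") simp_all
  qed auto
  from this[OF assms(1,2)] this[OF assms(1,3)] show ?thesis
    by (blast intro: reach_trans reach_sym)
qed

lemma reach_closed:
  assumes closed: "\<forall>(u, v)\<in>set os. u \<in> S \<longleftrightarrow> v \<in> S"
    and "reach (edges_of os) u v" "u \<in> S"
  shows "v \<in> S"
proof -
  from assms(2) have "(u, v) \<in> (adj_rel (edges_of os))\<^sup>*"
    by (simp add: reach_def)
  then show ?thesis
  proof (induction rule: rtrancl_induct)
    case (step y z)
    then obtain p where "p \<in> set os" "{y, z} = edge_of p"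
      by (auto simp: adj_rel_def)
    with closed step.IH show ?case
      by (cases p) (auto simp: edge_of_def doubleton_eq_iff)
  qed (use assms(3) in simp)
qed

lemma edges_of_append_diff:
  assumes "edge_list n (ts @ os)"
  shows "edges_of (ts @ os) - edges_of ts = edges_of os"
proof -
  have "edges_of (ts @ os) - edges_of ts = edge_of ` (set (ts @ os) - set ts)"
    using inj_on_edge_of[OF assms] by (intro inj_on_image_set_diff[symmetric]) auto
  also have "set (ts @ os) - set ts = set os"
    using assms by (auto simp: edge_list_def)
  finally show ?thesis .
qed

lemma distinct_map_set_if_distinct_concat:
  assumes "distinct (concat cs)" "[] \<notin> set cs"
  shows "distinct (map set cs)"
proof -
  have "distinct cs" and disjoint: "\<And>c d. c \<in> set cs \<Longrightarrow> d \<in> set cs \<Longrightarrow> c \<noteq> d \<Longrightarrow> set c \<inter> set d = {}"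
    using assms by (auto simp: distinct_concat_iff)
  moreover have "inj_on set (set cs)"
    using disjoint assms(2) by (force intro: inj_onI)
  ultimately show ?thesis
    by (simp add: distinct_map)
qed

definition outer_cycle_certificate ::
    "nat \<Rightarrow> (nat \<times> nat) list \<Rightarrow> (nat \<times> nat) list \<Rightarrow> nat list list \<Rightarrow> bool" where
  "outer_cycle_certificate n ts os cs \<longleftrightarrow>
     distinct (concat cs) \<and> [] \<notin> set cs \<and>
     set (concat cs) = {v \<in> set [0..<n]. length (neighbours ts v) = 1} \<and>
     (\<forall>c\<in>set cs. set (path_edges c) \<subseteq> set os \<and> (\<forall>(u, v)\<in>set os. u \<in> set c \<longleftrightarrow> v \<in> set c))"

lemma outer_cycles_eq:
  assumes es: "edge_list n (ts @ os)" and cert: "outer_cycle_certificate n ts os cs"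
  shows "outer_cycles {0..<n} (edges_of (ts @ os)) (edges_of ts) = set ` set cs"
proof -
  have ts: "edge_list n ts"
    using edge_list_append[OF es] by simp
  from cert have nonempty: "[] \<notin> set cs"
    and leaf_set: "set (concat cs) = {v \<in> set [0..<n]. length (neighbours ts v) = 1}"
    and walk: "\<And>c. c \<in> set cs \<Longrightarrow> set (path_edges c) \<subseteq> set os"
    and closed: "\<And>c. c \<in> set cs \<Longrightarrow> \<forall>(u, v)\<in>set os. u \<in> set c \<longleftrightarrow> v \<in> set c"
    unfolding outer_cycle_certificate_def by blast+
  have leaves: "leaves {0..<n} (edges_of ts) = (\<Union>c\<in>set cs. set c)"
    using leaf_set by (auto simp: leaves_def degree_edges_of[OF ts])
  have component: "{v \<in> leaves {0..<n} (edges_of ts). reach (edges_of os) u v} = set c"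
    if "c \<in> set cs" "u \<in> set c" for c u
  proof (intro equalityI subsetI)
    fix v assume "v \<in> {v \<in> leaves {0..<n} (edges_of ts). reach (edges_of os) u v}"
    then show "v \<in> set c"
      using reach_closed[OF closed[OF that(1)] _ that(2)] by blast
  next
    fix v assume "v \<in> set c"
    with that leaves reach_along_path[OF walk[OF that(1)] that(2)]
    show "v \<in> {v \<in> leaves {0..<n} (edges_of ts). reach (edges_of os) u v}"
      by blast
  qed
  show ?thesis
    unfolding outer_cycles_def edges_of_append_diff[OF es]
  proof (intro equalityI subsetI)
    fix C assume "C \<in> {{v \<in> leaves {0..<n} (edges_of ts). reach (edges_of os) u v} |u.
      u \<in> leaves {0..<n} (edges_of ts)}"
    then obtain u where u: "u \<in> leaves {0..<n} (edges_of ts)"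
      and C: "C = {v \<in> leaves {0..<n} (edges_of ts). reach (edges_of os) u v}"
      by blast
    from u leaves obtain c where "c \<in> set cs" "u \<in> set c"
      by blast
    with C component show "C \<in> set ` set cs"
      by blast
  next
    fix C assume "C \<in> set ` set cs"
    then obtain c where c: "c \<in> set cs" "C = set c"
      by blast
    from c(1) nonempty have "c \<noteq> []"
      by blast
    then have "hd c \<in> set c"
      by simp
    with c component[of c "hd c"] leaves
    show "C \<in> {{v \<in> leaves {0..<n} (edges_of ts). reach (edges_of os) u v} |u.
      u \<in> leaves {0..<n} (edges_of ts)}"
      by blast
  qed
qed

lemma oc_eq:
  assumes es: "edge_list n (ts @ os)" and cert: "outer_cycle_certificate n ts os cs"
  shows "oc {0..<n} (edges_of (ts @ os)) (edges_of ts) = mset (map length cs)"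
proof -
  have distinct: "distinct (concat cs)" "[] \<notin> set cs"
    using cert by (simp_all add: outer_cycle_certificate_def)
  have "oc {0..<n} (edges_of (ts @ os)) (edges_of ts) = image_mset card (mset_set (set (map set cs)))"
    unfolding oc_def outer_cycles_eq[OF es cert] by simp
  also have "\<dots> = image_mset card (mset (map set cs))"
    by (simp only: mset_set_set[OF distinct_map_set_if_distinct_concat[OF distinct]])
  also have "\<dots> = mset (map length cs)"
    unfolding mset_map multiset.map_comp using distinct(1)
    by (intro image_mset_cong) (auto simp: distinct_concat_iff distinct_card)
  finally show ?thesis .
qed

record snark_certificate =
  vertex_count :: nat
  tree_edges :: "(nat \<times> nat) list"
  cotree_edges :: "(nat \<times> nat) list"
  parents :: "nat list"
  depths :: "nat list"
  outer_cycle_lists :: "nat list list"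
  colouring_order :: "(nat \<times> nat) list"
  linkages :: "((nat \<times> nat) \<times> ((nat \<times> nat) \<times> nat list list) list) list"

definition certified :: "snark_certificate \<Rightarrow> bool" where
  "certified w \<longleftrightarrow>
     (let n = vertex_count w; ts = tree_edges w; os = cotree_edges w; es = ts @ os in
       edge_list n es \<and> (\<forall>v\<in>set [0..<n]. length (neighbours es v) = 3) \<and> no_short_cycles n es \<and>
       set (colouring_order w) \<subseteq> set es \<and> forces_uncolourable (colouring_order w) \<and>
       linkage_certificate es os (linkages w) \<and>
       parent_certificate n ts (parents w) (depths w) \<and>
       (\<forall>v\<in>set [0..<n]. length (neighbours ts v) \<in> {1, 3}) \<and>
       outer_cycle_certificate n ts os (outer_cycle_lists w))"

theorem certified_realises_oc:
  assumes "certified w"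
  shows "\<exists>(V :: nat set) E T. snark V E \<and> hist V E T \<and> oc V E T = mset (map length (outer_cycle_lists w))"
proof (intro exI conjI)
  let ?n = "vertex_count w" and ?ts = "tree_edges w" and ?os = "cotree_edges w"
  have es: "edge_list ?n (?ts @ ?os)"
    and cubic: "\<forall>v\<in>set [0..<?n]. length (neighbours (?ts @ ?os) v) = 3"
    and girth: "no_short_cycles ?n (?ts @ ?os)"
    and order: "set (colouring_order w) \<subseteq> set (?ts @ ?os)"
    and uncolourable: "forces_uncolourable (colouring_order w)"
    and linkage: "linkage_certificate (?ts @ ?os) ?os (linkages w)"
    and tree: "parent_certificate ?n ?ts (parents w) (depths w)"
    and tree_degrees: "\<forall>v\<in>set [0..<?n]. length (neighbours ?ts v) \<in> {1, 3}"
    and outer: "outer_cycle_certificate ?n ?ts ?os (outer_cycle_lists w)"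
    using assms unfolding certified_def Let_def by blast+
  show "snark {0..<?n} (edges_of (?ts @ ?os))"
    unfolding snark_def
    using cubic_edges_of[OF es cubic] girth_ge_5I[OF es girth]
      not_three_edge_colourableI[OF es order uncolourable]
      cyclically_4_edge_connectedI[OF es linkage cycle_meets_cotree[OF tree]]
    by blast
  show "hist {0..<?n} (edges_of (?ts @ ?os)) (edges_of ?ts)"
    by (rule hist_if_parent_certificate[OF es tree tree_degrees])
  show "oc {0..<?n} (edges_of (?ts @ ?os)) (edges_of ?ts) = mset (map length (outer_cycle_lists w))"
    by (rule oc_eq[OF es outer])
qed

section \<open>Ten snarks\<close>

definition snark_5_5 :: snark_certificate where
  "snark_5_5 = \<lparr>
     vertex_count = 18,
     tree_edges = [(0, 4), (0, 5), (0, 13), (1, 12), (2, 7), (3, 4), (4, 9), (5, 8), (5, 10),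
                   (6, 9), (7, 9), (7, 14), (11, 12), (12, 17), (14, 16), (14, 17), (15, 17)],
     cotree_edges = [(1, 2), (1, 6), (2, 3), (3, 8), (6, 8), (10, 11), (10, 15), (11, 16),
                     (13, 15), (13, 16)],
     parents = [0, 12, 7, 4, 0, 0, 9, 9, 5, 4, 5, 12, 17, 0, 7, 17, 14, 14],
     depths = [0, 7, 4, 2, 1, 1, 3, 3, 2, 2, 2, 7, 6, 1, 4, 6, 5, 5],
     outer_cycle_lists = [[1, 2, 3, 8, 6], [10, 11, 16, 13, 15]],
     colouring_order = [(1, 2), (1, 6), (1, 12), (6, 8), (6, 9), (2, 3), (2, 7), (7, 9), (4, 9),
                        (7, 14), (3, 4), (3, 8), (5, 8), (0, 4), (0, 5), (0, 13), (5, 10),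
                        (13, 15), (13, 16), (14, 16), (11, 16), (14, 17), (10, 11), (10, 15),
                        (15, 17), (11, 12), (12, 17)],
     linkages = [
       ((0, 4), [
          ((1, 2), [[0, 13, 15, 17, 12, 1], [0, 5, 8, 6, 1], [4, 9, 7, 2], [4, 3, 2]]),
          ((1, 6), [[0, 13, 15, 17, 12, 1], [0, 5, 8, 6], [4, 3, 2, 1], [4, 9, 6]]),
          ((2, 3), [[0, 13, 15, 17, 12, 1, 2], [0, 5, 8, 3], [4, 9, 7, 2], [4, 3]]),
          ((3, 8), [[0, 13, 16, 14, 7, 2, 3], [0, 5, 8], [4, 9, 6, 8], [4, 3]]),
          ((6, 8), [[0, 13, 15, 17, 12, 1, 6], [0, 5, 8], [4, 9, 6], [4, 3, 8]]),
          ((10, 11), [[0, 13, 15, 10], [0, 5, 10], [4, 9, 7, 14, 16, 11], [4, 3, 2, 1, 12, 11]]),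
          ((10, 15), [[0, 13, 15], [0, 5, 10], [4, 3, 2, 1, 12, 11, 10], [4, 9, 7, 14, 17, 15]]),
          ((11, 16), [[0, 5, 10, 11], [0, 13, 16], [4, 3, 2, 1, 12, 11], [4, 9, 7, 14, 16]]),
          ((13, 15), [[0, 5, 10, 15], [0, 13], [4, 3, 2, 1, 12, 17, 15], [4, 9, 7, 14, 16, 13]]),
          ((13, 16), [[0, 5, 10, 11, 16], [0, 13], [4, 3, 2, 1, 12, 17, 15, 13], [4, 9, 7, 14, 16]])]),
       ((0, 5), [
          ((1, 2), [[0, 13, 16, 14, 7, 2], [0, 4, 3, 2], [5, 10, 11, 12, 1], [5, 8, 6, 1]]),
          ((1, 6), [[0, 13, 16, 14, 7, 2, 1], [0, 4, 9, 6], [5, 10, 11, 12, 1], [5, 8, 6]]),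
          ((2, 3), [[0, 13, 16, 14, 7, 2], [0, 4, 3], [5, 10, 11, 12, 1, 2], [5, 8, 3]]),
          ((3, 8), [[0, 13, 16, 14, 7, 2, 3], [0, 4, 3], [5, 10, 11, 12, 1, 6, 8], [5, 8]]),
          ((6, 8), [[0, 13, 16, 14, 7, 9, 6], [0, 4, 3, 8], [5, 10, 11, 12, 1, 6], [5, 8]]),
          ((10, 11), [[0, 4, 9, 7, 14, 16, 11], [0, 13, 15, 10], [5, 8, 6, 1, 12, 11], [5, 10]]),
          ((10, 15), [[0, 4, 9, 7, 14, 17, 15], [0, 13, 15], [5, 8, 6, 1, 12, 11, 10], [5, 10]]),
          ((11, 16), [[0, 4, 9, 7, 14, 16], [0, 13, 16], [5, 8, 6, 1, 12, 11], [5, 10, 11]]),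
          ((13, 15), [[0, 4, 9, 7, 14, 16, 13], [0, 13], [5, 8, 6, 1, 12, 17, 15], [5, 10, 15]]),
          ((13, 16), [[0, 4, 9, 7, 14, 16], [0, 13], [5, 8, 6, 1, 12, 17, 15, 13], [5, 10, 11, 16]])]),
       ((0, 13), [
          ((1, 2), [[0, 5, 8, 6, 1], [0, 4, 3, 2], [13, 16, 14, 7, 2], [13, 15, 17, 12, 1]]),
          ((1, 6), [[0, 4, 9, 6], [0, 5, 8, 6], [13, 16, 14, 7, 2, 1], [13, 15, 17, 12, 1]]),
          ((2, 3), [[0, 5, 8, 3], [0, 4, 3], [13, 15, 17, 12, 1, 2], [13, 16, 14, 7, 2]]),
          ((3, 8), [[0, 4, 3], [0, 5, 8], [13, 15, 17, 12, 1, 6, 8], [13, 16, 14, 7, 2, 3]]),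
          ((6, 8), [[0, 4, 3, 8], [0, 5, 8], [13, 16, 14, 7, 9, 6], [13, 15, 17, 12, 1, 6]]),
          ((10, 11), [[0, 4, 3, 2, 1, 12, 11], [0, 5, 10], [13, 16, 11], [13, 15, 10]]),
          ((10, 15), [[0, 4, 9, 7, 14, 17, 15], [0, 5, 10], [13, 16, 11, 10], [13, 15]]),
          ((11, 16), [[0, 4, 9, 7, 14, 16], [0, 5, 10, 11], [13, 15, 17, 12, 11], [13, 16]])]),
       ((1, 12), [
          ((2, 3), [[1, 6, 8, 3], [1, 2], [12, 11, 10, 5, 0, 4, 3], [12, 17, 14, 7, 2]]),
          ((3, 8), [[1, 6, 8], [1, 2, 3], [12, 17, 15, 13, 0, 4, 3], [12, 11, 10, 5, 8]]),
          ((6, 8), [[1, 2, 3, 8], [1, 6], [12, 17, 14, 7, 9, 6], [12, 11, 10, 5, 8]]),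
          ((10, 11), [[1, 2, 7, 14, 16, 11], [1, 6, 8, 5, 10], [12, 17, 15, 10], [12, 11]]),
          ((10, 15), [[1, 2, 3, 4, 0, 13, 15], [1, 6, 8, 5, 10], [12, 17, 15], [12, 11, 10]]),
          ((11, 16), [[1, 2, 3, 4, 0, 13, 16], [1, 6, 8, 5, 10, 11], [12, 17, 14, 16], [12, 11]]),
          ((13, 15), [[1, 6, 9, 7, 14, 16, 13], [1, 2, 3, 4, 0, 13], [12, 11, 10, 15], [12, 17, 15]]),
          ((13, 16), [[1, 6, 8, 5, 0, 13], [1, 2, 7, 14, 16], [12, 17, 15, 13], [12, 11, 16]])])]\<rparr>"

definition snark_5_6 :: snark_certificate where
  "snark_5_6 = \<lparr>
     vertex_count = 20,
     tree_edges = [(0, 4), (0, 5), (0, 13), (1, 12), (2, 7), (3, 4), (4, 9), (5, 8), (5, 18),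
                   (6, 9), (7, 9), (7, 19), (10, 15), (11, 12), (12, 17), (13, 15), (13, 16),
                   (14, 17), (15, 17)],
     cotree_edges = [(1, 2), (1, 6), (2, 3), (3, 8), (6, 8), (10, 11), (10, 18), (11, 16),
                     (14, 16), (14, 19), (18, 19)],
     parents = [0, 12, 7, 4, 0, 0, 9, 9, 5, 4, 15, 12, 17, 0, 17, 13, 13, 15, 5, 7],
     depths = [0, 5, 4, 2, 1, 1, 3, 3, 2, 2, 3, 5, 4, 1, 4, 2, 2, 3, 2, 4],
     outer_cycle_lists = [[1, 2, 3, 8, 6], [10, 11, 16, 14, 19, 18]],
     colouring_order = [(1, 2), (1, 6), (1, 12), (6, 8), (6, 9), (2, 3), (2, 7), (7, 9), (4, 9),
                        (7, 19), (3, 4), (3, 8), (5, 8), (0, 4), (0, 5), (0, 13), (5, 18),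
                        (18, 19), (10, 18), (14, 19), (13, 15), (13, 16), (14, 16), (11, 16),
                        (14, 17), (10, 11), (10, 15), (15, 17), (11, 12), (12, 17)],
     linkages = [
       ((0, 4), [
          ((1, 2), [[0, 13, 15, 17, 12, 1], [0, 5, 8, 6, 1], [4, 9, 7, 2], [4, 3, 2]]),
          ((1, 6), [[0, 13, 15, 17, 12, 1], [0, 5, 8, 6], [4, 3, 2, 1], [4, 9, 6]]),
          ((2, 3), [[0, 13, 15, 17, 12, 1, 2], [0, 5, 8, 3], [4, 9, 7, 2], [4, 3]]),
          ((3, 8), [[0, 13, 15, 17, 12, 1, 2, 3], [0, 5, 8], [4, 9, 6, 8], [4, 3]]),
          ((6, 8), [[0, 13, 15, 17, 12, 1, 6], [0, 5, 8], [4, 9, 6], [4, 3, 8]]),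
          ((10, 11), [[0, 13, 15, 10], [0, 5, 18, 10], [4, 9, 7, 19, 14, 16, 11], [4, 3, 2, 1, 12, 11]]),
          ((10, 18), [[0, 13, 15, 10], [0, 5, 18], [4, 3, 2, 1, 12, 11, 10], [4, 9, 7, 19, 18]]),
          ((11, 16), [[0, 5, 18, 10, 11], [0, 13, 16], [4, 9, 7, 19, 14, 16], [4, 3, 2, 1, 12, 11]]),
          ((14, 16), [[0, 5, 18, 10, 15, 17, 14], [0, 13, 16], [4, 9, 7, 19, 14], [4, 3, 2, 1, 12, 11, 16]]),
          ((14, 19), [[0, 13, 16, 14], [0, 5, 18, 19], [4, 3, 2, 1, 12, 17, 14], [4, 9, 7, 19]]),
          ((18, 19), [[0, 13, 15, 10, 18], [0, 5, 18], [4, 3, 2, 1, 12, 17, 14, 19], [4, 9, 7, 19]])]),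
       ((0, 5), [
          ((1, 2), [[0, 13, 15, 17, 12, 1], [0, 4, 3, 2], [5, 18, 19, 7, 2], [5, 8, 6, 1]]),
          ((1, 6), [[0, 13, 15, 17, 12, 1], [0, 4, 9, 6], [5, 18, 19, 7, 2, 1], [5, 8, 6]]),
          ((2, 3), [[0, 13, 15, 17, 12, 1, 2], [0, 4, 3], [5, 18, 19, 7, 2], [5, 8, 3]]),
          ((3, 8), [[0, 13, 15, 17, 12, 1, 6, 8], [0, 4, 3], [5, 18, 19, 7, 2, 3], [5, 8]]),
          ((6, 8), [[0, 13, 15, 17, 12, 1, 6], [0, 4, 3, 8], [5, 18, 19, 7, 9, 6], [5, 8]]),
          ((10, 11), [[0, 4, 9, 7, 19, 14, 16, 11], [0, 13, 15, 10], [5, 8, 6, 1, 12, 11], [5, 18, 10]]),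
          ((10, 18), [[0, 4, 9, 7, 19, 18], [0, 13, 15, 10], [5, 8, 6, 1, 12, 11, 10], [5, 18]]),
          ((11, 16), [[0, 4, 9, 7, 19, 14, 16], [0, 13, 16], [5, 8, 6, 1, 12, 11], [5, 18, 10, 11]]),
          ((14, 16), [[0, 4, 9, 7, 19, 14], [0, 13, 16], [5, 8, 6, 1, 12, 11, 16], [5, 18, 10, 15, 17, 14]]),
          ((14, 19), [[0, 4, 9, 7, 19], [0, 13, 16, 14], [5, 8, 6, 1, 12, 17, 14], [5, 18, 19]]),
          ((18, 19), [[0, 13, 15, 10, 18], [0, 4, 9, 7, 19], [5, 8, 6, 1, 12, 17, 14, 19], [5, 18]])]),
       ((0, 13), [
          ((1, 2), [[0, 5, 8, 6, 1], [0, 4, 3, 2], [13, 16, 14, 19, 7, 2], [13, 15, 17, 12, 1]]),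
          ((1, 6), [[0, 4, 9, 6], [0, 5, 8, 6], [13, 16, 14, 19, 7, 2, 1], [13, 15, 17, 12, 1]]),
          ((2, 3), [[0, 5, 8, 3], [0, 4, 3], [13, 16, 14, 19, 7, 2], [13, 15, 17, 12, 1, 2]]),
          ((3, 8), [[0, 4, 3], [0, 5, 8], [13, 16, 14, 19, 7, 9, 6, 8], [13, 15, 17, 12, 1, 2, 3]]),
          ((6, 8), [[0, 4, 3, 8], [0, 5, 8], [13, 16, 14, 19, 7, 9, 6], [13, 15, 17, 12, 1, 6]]),
          ((10, 11), [[0, 4, 3, 2, 1, 12, 11], [0, 5, 18, 10], [13, 16, 11], [13, 15, 10]]),
          ((10, 18), [[0, 4, 9, 7, 19, 18], [0, 5, 18], [13, 16, 11, 10], [13, 15, 10]]),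
          ((11, 16), [[0, 4, 3, 2, 1, 12, 11], [0, 5, 18, 19, 14, 16], [13, 15, 10, 11], [13, 16]]),
          ((14, 16), [[0, 4, 3, 2, 1, 12, 11, 16], [0, 5, 18, 19, 14], [13, 15, 17, 14], [13, 16]]),
          ((14, 19), [[0, 4, 9, 7, 19], [0, 5, 18, 19], [13, 15, 17, 14], [13, 16, 14]]),
          ((18, 19), [[0, 4, 9, 7, 19], [0, 5, 18], [13, 16, 14, 19], [13, 15, 10, 18]])]),
       ((1, 12), [
          ((2, 3), [[1, 6, 8, 3], [1, 2], [12, 11, 16, 13, 0, 4, 3], [12, 17, 14, 19, 7, 2]]),
          ((3, 8), [[1, 6, 8], [1, 2, 3], [12, 17, 15, 13, 0, 4, 3], [12, 11, 10, 18, 5, 8]]),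
          ((6, 8), [[1, 2, 3, 8], [1, 6], [12, 17, 14, 19, 7, 9, 6], [12, 11, 10, 18, 5, 8]]),
          ((10, 11), [[1, 6, 8, 5, 0, 13, 16, 11], [1, 2, 7, 19, 18, 10], [12, 17, 15, 10], [12, 11]]),
          ((10, 18), [[1, 6, 8, 5, 18], [1, 2, 7, 19, 18], [12, 17, 15, 10], [12, 11, 10]]),
          ((11, 16), [[1, 6, 8, 5, 18, 10, 11], [1, 2, 3, 4, 0, 13, 16], [12, 17, 14, 16], [12, 11]]),
          ((14, 16), [[1, 6, 8, 5, 0, 13, 16], [1, 2, 7, 19, 14], [12, 17, 14], [12, 11, 16]]),
          ((14, 19), [[1, 6, 8, 5, 18, 19], [1, 2, 7, 19], [12, 11, 16, 14], [12, 17, 14]]),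
          ((18, 19), [[1, 6, 8, 5, 18], [1, 2, 7, 19], [12, 17, 14, 19], [12, 11, 10, 18]])])]\<rparr>"

definition snark_5_7 :: snark_certificate where
  "snark_5_7 = \<lparr>
     vertex_count = 22,
     tree_edges = [(0, 5), (1, 12), (2, 7), (3, 4), (4, 9), (4, 20), (5, 8), (5, 18), (6, 9),
                   (7, 9), (7, 19), (10, 18), (11, 16), (12, 17), (12, 21), (13, 16), (14, 16),
                   (14, 17), (14, 19), (15, 17), (18, 19)],
     cotree_edges = [(0, 13), (0, 20), (1, 2), (1, 6), (2, 3), (3, 8), (6, 8), (10, 11),
                     (10, 15), (11, 21), (13, 15), (20, 21)],
     parents = [0, 12, 7, 4, 9, 0, 9, 19, 5, 7, 18, 16, 17, 16, 19, 17, 14, 14, 5, 18, 4, 12],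
     depths = [0, 7, 5, 7, 6, 1, 6, 4, 2, 5, 3, 6, 6, 6, 4, 6, 5, 5, 2, 3, 7, 7],
     outer_cycle_lists = [[1, 2, 3, 8, 6], [0, 13, 15, 10, 11, 21, 20]],
     colouring_order = [(1, 2), (1, 6), (1, 12), (6, 8), (6, 9), (2, 3), (2, 7), (7, 9), (4, 9),
                        (7, 19), (3, 4), (3, 8), (5, 8), (4, 20), (0, 5), (5, 18), (18, 19),
                        (10, 18), (14, 19), (0, 20), (0, 13), (20, 21), (12, 21), (12, 17),
                        (11, 21), (10, 11), (10, 15), (11, 16), (13, 15), (15, 17), (13, 16),
                        (14, 16), (14, 17)],
     linkages = [
       ((0, 5), [
          ((1, 2), [[0, 13, 15, 17, 12, 1], [0, 20, 4, 3, 2], [5, 18, 19, 7, 2], [5, 8, 6, 1]]),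
          ((1, 6), [[0, 13, 15, 17, 12, 1], [0, 20, 4, 9, 6], [5, 18, 19, 7, 2, 1], [5, 8, 6]]),
          ((2, 3), [[0, 13, 15, 17, 12, 1, 2], [0, 20, 4, 3], [5, 18, 19, 7, 2], [5, 8, 3]]),
          ((3, 8), [[0, 13, 15, 17, 12, 1, 6, 8], [0, 20, 4, 3], [5, 18, 19, 7, 2, 3], [5, 8]]),
          ((6, 8), [[0, 13, 15, 17, 12, 1, 6], [0, 20, 4, 3, 8], [5, 18, 19, 7, 9, 6], [5, 8]]),
          ((10, 11), [[0, 20, 21, 11], [0, 13, 15, 10], [5, 8, 6, 1, 12, 17, 14, 16, 11], [5, 18, 10]]),
          ((10, 15), [[0, 20, 21, 11, 10], [0, 13, 15], [5, 8, 6, 1, 12, 17, 15], [5, 18, 10]]),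
          ((11, 21), [[0, 13, 16, 11], [0, 20, 21], [5, 8, 6, 1, 12, 21], [5, 18, 10, 11]]),
          ((13, 15), [[0, 20, 21, 11, 16, 13], [0, 13], [5, 8, 6, 1, 12, 17, 15], [5, 18, 10, 15]]),
          ((20, 21), [[0, 13, 16, 11, 21], [0, 20], [5, 18, 10, 15, 17, 12, 21], [5, 8, 3, 4, 20]])]),
       ((1, 12), [
          ((0, 13), [[1, 2, 7, 19, 14, 16, 13], [1, 6, 8, 5, 0], [12, 21, 20, 0], [12, 17, 15, 13]]),
          ((0, 20), [[1, 6, 8, 5, 0], [1, 2, 3, 4, 20], [12, 17, 15, 13, 0], [12, 21, 20]]),
          ((2, 3), [[1, 6, 8, 3], [1, 2], [12, 17, 14, 19, 7, 2], [12, 21, 20, 4, 3]]),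
          ((3, 8), [[1, 6, 8], [1, 2, 3], [12, 17, 15, 13, 0, 5, 8], [12, 21, 20, 4, 3]]),
          ((6, 8), [[1, 2, 3, 8], [1, 6], [12, 17, 14, 19, 7, 9, 6], [12, 21, 20, 0, 5, 8]]),
          ((10, 11), [[1, 6, 8, 5, 0, 13, 16, 11], [1, 2, 7, 19, 18, 10], [12, 17, 15, 10], [12, 21, 11]]),
          ((10, 15), [[1, 6, 8, 5, 0, 13, 15], [1, 2, 7, 19, 18, 10], [12, 21, 11, 10], [12, 17, 15]]),
          ((11, 21), [[1, 6, 8, 5, 0, 13, 16, 11], [1, 2, 3, 4, 20, 21], [12, 17, 15, 10, 11], [12, 21]]),
          ((13, 15), [[1, 2, 7, 19, 14, 16, 13], [1, 6, 8, 5, 0, 13], [12, 21, 11, 10, 15], [12, 17, 15]]),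
          ((20, 21), [[1, 6, 8, 5, 0, 20], [1, 2, 3, 4, 20], [12, 17, 15, 10, 11, 21], [12, 21]])]),
       ((2, 7), [
          ((0, 13), [[2, 1, 12, 17, 15, 13], [2, 3, 4, 20, 0], [7, 9, 6, 8, 5, 0], [7, 19, 14, 16, 13]]),
          ((0, 20), [[2, 1, 12, 21, 20], [2, 3, 4, 20], [7, 9, 6, 8, 5, 0], [7, 19, 18, 10, 15, 13, 0]]),
          ((1, 6), [[2, 3, 8, 6], [2, 1], [7, 19, 14, 17, 12, 1], [7, 9, 6]]),
          ((3, 8), [[2, 1, 6, 8], [2, 3], [7, 19, 18, 5, 8], [7, 9, 4, 3]]),
          ((6, 8), [[2, 3, 8], [2, 1, 6], [7, 19, 18, 5, 8], [7, 9, 6]]),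
          ((10, 11), [[2, 3, 4, 20, 0, 13, 15, 10], [2, 1, 12, 21, 11], [7, 9, 6, 8, 5, 18, 10], [7, 19, 14, 16, 11]]),
          ((10, 15), [[2, 3, 4, 20, 21, 11, 10], [2, 1, 12, 17, 15], [7, 9, 6, 8, 5, 0, 13, 15], [7, 19, 18, 10]]),
          ((11, 21), [[2, 3, 4, 20, 21], [2, 1, 12, 21], [7, 9, 6, 8, 5, 18, 10, 11], [7, 19, 14, 16, 11]]),
          ((13, 15), [[2, 3, 4, 20, 0, 13], [2, 1, 12, 17, 15], [7, 9, 6, 8, 5, 18, 10, 15], [7, 19, 14, 16, 13]]),
          ((20, 21), [[2, 3, 4, 20], [2, 1, 12, 21], [7, 9, 6, 8, 5, 0, 20], [7, 19, 14, 16, 11, 21]])]),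
       ((3, 4), [
          ((0, 13), [[3, 2, 1, 12, 17, 15, 13], [3, 8, 5, 0], [4, 9, 7, 19, 14, 16, 13], [4, 20, 0]]),
          ((0, 20), [[3, 2, 1, 12, 21, 20], [3, 8, 5, 0], [4, 9, 7, 19, 14, 16, 13, 0], [4, 20]]),
          ((1, 2), [[3, 8, 6, 1], [3, 2], [4, 20, 21, 12, 1], [4, 9, 7, 2]]),
          ((1, 6), [[3, 8, 6], [3, 2, 1], [4, 20, 21, 12, 1], [4, 9, 6]]),
          ((6, 8), [[3, 2, 1, 6], [3, 8], [4, 20, 0, 5, 8], [4, 9, 6]]),
          ((10, 11), [[3, 2, 1, 12, 17, 15, 10], [3, 8, 5, 18, 10], [4, 9, 7, 19, 14, 16, 11], [4, 20, 21, 11]]),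
          ((10, 15), [[3, 2, 1, 12, 17, 15], [3, 8, 5, 18, 10], [4, 9, 7, 19, 14, 16, 11, 10], [4, 20, 0, 13, 15]]),
          ((11, 21), [[3, 8, 5, 18, 10, 11], [3, 2, 1, 12, 21], [4, 9, 7, 19, 14, 16, 11], [4, 20, 21]]),
          ((13, 15), [[3, 8, 5, 18, 10, 15], [3, 2, 1, 12, 17, 15], [4, 9, 7, 19, 14, 16, 13], [4, 20, 0, 13]]),
          ((20, 21), [[3, 8, 5, 0, 20], [3, 2, 1, 12, 21], [4, 9, 7, 19, 14, 16, 11, 21], [4, 20]])])]\<rparr>"

definition snark_5_8 :: snark_certificate where
  "snark_5_8 = \<lparr>
     vertex_count = 24,
     tree_edges = [(0, 4), (1, 12), (2, 7), (3, 4), (4, 9), (5, 22), (6, 9), (7, 9), (7, 23),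
                   (8, 22), (10, 15), (11, 12), (12, 17), (13, 15), (14, 16), (14, 17),
                   (14, 21), (15, 17), (18, 19), (19, 21), (19, 23), (20, 21), (22, 23)],
     cotree_edges = [(0, 13), (0, 20), (1, 2), (1, 6), (2, 3), (3, 8), (5, 18), (5, 20), (6, 8),
                     (10, 11), (10, 18), (11, 16), (13, 16)],
     parents = [0, 12, 7, 4, 0, 22, 9, 9, 22, 4, 15, 12, 17, 15, 21, 17, 14, 14, 19, 23, 21, 19,
                23, 7],
     depths = [0, 10, 4, 2, 1, 6, 3, 3, 6, 2, 10, 10, 9, 10, 7, 9, 8, 8, 6, 5, 7, 6, 5, 4],
     outer_cycle_lists = [[1, 2, 3, 8, 6], [0, 13, 16, 11, 10, 18, 5, 20]],
     colouring_order = [(5, 18), (10, 18), (18, 19), (10, 11), (10, 15), (13, 15), (15, 17),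
                        (11, 12), (11, 16), (13, 16), (14, 16), (0, 13), (12, 17), (14, 17),
                        (1, 12), (14, 21), (19, 21), (20, 21), (19, 23), (0, 20), (5, 20),
                        (0, 4), (5, 22), (22, 23), (8, 22), (7, 23), (1, 2), (1, 6), (6, 8),
                        (3, 8), (6, 9), (2, 3), (2, 7), (7, 9), (3, 4), (4, 9)],
     linkages = [
       ((0, 4), [
          ((1, 2), [[0, 20, 5, 22, 8, 6, 1], [0, 13, 15, 17, 12, 1], [4, 9, 7, 2], [4, 3, 2]]),
          ((1, 6), [[0, 20, 5, 22, 8, 6], [0, 13, 15, 17, 12, 1], [4, 3, 2, 1], [4, 9, 6]]),
          ((2, 3), [[0, 13, 15, 17, 12, 1, 2], [0, 20, 5, 22, 8, 3], [4, 9, 7, 2], [4, 3]]),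
          ((3, 8), [[0, 13, 15, 17, 12, 1, 2, 3], [0, 20, 5, 22, 8], [4, 9, 6, 8], [4, 3]]),
          ((5, 18), [[0, 13, 15, 10, 18], [0, 20, 5], [4, 9, 7, 23, 19, 18], [4, 3, 8, 22, 5]]),
          ((5, 20), [[0, 13, 15, 10, 18, 5], [0, 20], [4, 9, 7, 23, 19, 21, 20], [4, 3, 8, 22, 5]]),
          ((6, 8), [[0, 13, 15, 17, 12, 1, 6], [0, 20, 5, 22, 8], [4, 9, 6], [4, 3, 8]]),
          ((10, 11), [[0, 20, 5, 18, 10], [0, 13, 15, 10], [4, 9, 7, 23, 19, 21, 14, 16, 11], [4, 3, 2, 1, 12, 11]]),
          ((10, 18), [[0, 20, 5, 18], [0, 13, 15, 10], [4, 3, 2, 1, 12, 11, 10], [4, 9, 7, 23, 19, 18]]),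
          ((11, 16), [[0, 20, 21, 14, 16], [0, 13, 16], [4, 9, 7, 23, 19, 18, 10, 11], [4, 3, 2, 1, 12, 11]]),
          ((13, 16), [[0, 20, 21, 14, 16], [0, 13], [4, 9, 7, 23, 19, 18, 10, 15, 13], [4, 3, 2, 1, 12, 11, 16]])]),
       ((1, 12), [
          ((0, 13), [[1, 6, 8, 22, 5, 20, 0], [1, 2, 3, 4, 0], [12, 17, 15, 13], [12, 11, 16, 13]]),
          ((0, 20), [[1, 6, 8, 22, 5, 20], [1, 2, 3, 4, 0], [12, 17, 14, 21, 20], [12, 11, 16, 13, 0]]),
          ((2, 3), [[1, 6, 8, 3], [1, 2], [12, 17, 14, 21, 19, 23, 7, 2], [12, 11, 16, 13, 0, 4, 3]]),
          ((3, 8), [[1, 6, 8], [1, 2, 3], [12, 17, 15, 13, 0, 4, 3], [12, 11, 10, 18, 5, 22, 8]]),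
          ((5, 18), [[1, 2, 7, 23, 19, 18], [1, 6, 8, 22, 5], [12, 17, 14, 21, 20, 5], [12, 11, 10, 18]]),
          ((5, 20), [[1, 2, 3, 4, 0, 20], [1, 6, 8, 22, 5], [12, 17, 14, 21, 20], [12, 11, 10, 18, 5]]),
          ((6, 8), [[1, 2, 3, 8], [1, 6], [12, 17, 15, 13, 0, 4, 9, 6], [12, 11, 10, 18, 5, 22, 8]]),
          ((10, 11), [[1, 6, 9, 4, 0, 13, 16, 11], [1, 2, 7, 23, 19, 18, 10], [12, 17, 15, 10], [12, 11]]),
          ((10, 18), [[1, 6, 8, 22, 5, 18], [1, 2, 7, 23, 19, 18], [12, 17, 15, 10], [12, 11, 10]]),
          ((11, 16), [[1, 6, 8, 22, 5, 18, 10, 11], [1, 2, 3, 4, 0, 13, 16], [12, 17, 14, 16], [12, 11]]),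
          ((13, 16), [[1, 6, 8, 22, 5, 20, 21, 14, 16], [1, 2, 3, 4, 0, 13], [12, 17, 15, 13], [12, 11, 16]])]),
       ((2, 7), [
          ((0, 13), [[2, 1, 12, 11, 16, 13], [2, 3, 4, 0], [7, 9, 6, 8, 22, 5, 18, 10, 15, 13], [7, 23, 19, 21, 20, 0]]),
          ((0, 20), [[2, 1, 12, 11, 16, 13, 0], [2, 3, 4, 0], [7, 9, 6, 8, 22, 5, 20], [7, 23, 19, 21, 20]]),
          ((1, 6), [[2, 3, 8, 6], [2, 1], [7, 23, 19, 18, 10, 11, 12, 1], [7, 9, 6]]),
          ((3, 8), [[2, 1, 6, 8], [2, 3], [7, 23, 22, 8], [7, 9, 4, 3]]),
          ((5, 18), [[2, 1, 12, 11, 10, 18], [2, 3, 8, 22, 5], [7, 9, 4, 0, 20, 5], [7, 23, 19, 18]]),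
          ((5, 20), [[2, 1, 12, 11, 10, 18, 5], [2, 3, 4, 0, 20], [7, 9, 6, 8, 22, 5], [7, 23, 19, 21, 20]]),
          ((6, 8), [[2, 3, 8], [2, 1, 6], [7, 23, 22, 8], [7, 9, 6]]),
          ((10, 11), [[2, 3, 4, 0, 13, 15, 10], [2, 1, 12, 11], [7, 9, 6, 8, 22, 5, 20, 21, 14, 16, 11], [7, 23, 19, 18, 10]]),
          ((10, 18), [[2, 3, 8, 22, 5, 18], [2, 1, 12, 11, 10], [7, 9, 4, 0, 13, 15, 10], [7, 23, 19, 18]]),
          ((11, 16), [[2, 3, 4, 0, 13, 16], [2, 1, 12, 11], [7, 9, 6, 8, 22, 5, 20, 21, 14, 16], [7, 23, 19, 18, 10, 11]]),
          ((13, 16), [[2, 3, 4, 0, 13], [2, 1, 12, 11, 16], [7, 9, 6, 8, 22, 5, 18, 10, 15, 13], [7, 23, 19, 21, 14, 16]])]),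
       ((3, 4), [
          ((0, 13), [[3, 2, 1, 12, 11, 16, 13], [3, 8, 22, 5, 20, 0], [4, 9, 7, 23, 19, 18, 10, 15, 13], [4, 0]]),
          ((0, 20), [[3, 2, 7, 23, 19, 21, 20], [3, 8, 22, 5, 20], [4, 9, 6, 1, 12, 11, 16, 13, 0], [4, 0]]),
          ((1, 2), [[3, 8, 6, 1], [3, 2], [4, 0, 13, 15, 17, 12, 1], [4, 9, 7, 2]]),
          ((1, 6), [[3, 8, 6], [3, 2, 1], [4, 0, 13, 15, 17, 12, 1], [4, 9, 6]]),
          ((5, 18), [[3, 2, 7, 23, 19, 18], [3, 8, 22, 5], [4, 9, 6, 1, 12, 11, 10, 18], [4, 0, 20, 5]]),
          ((5, 20), [[3, 2, 7, 23, 19, 18, 5], [3, 8, 22, 5], [4, 9, 6, 1, 12, 17, 14, 21, 20], [4, 0, 20]]),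
          ((6, 8), [[3, 2, 1, 6], [3, 8], [4, 0, 20, 5, 22, 8], [4, 9, 6]]),
          ((10, 11), [[3, 8, 22, 5, 18, 10], [3, 2, 1, 12, 11], [4, 9, 7, 23, 19, 21, 14, 16, 11], [4, 0, 13, 15, 10]]),
          ((10, 18), [[3, 2, 1, 12, 11, 10], [3, 8, 22, 5, 18], [4, 9, 7, 23, 19, 18], [4, 0, 13, 15, 10]]),
          ((11, 16), [[3, 8, 22, 5, 18, 10, 11], [3, 2, 1, 12, 11], [4, 9, 7, 23, 19, 21, 14, 16], [4, 0, 13, 16]]),
          ((13, 16), [[3, 8, 22, 5, 18, 10, 15, 13], [3, 2, 1, 12, 11, 16], [4, 9, 7, 23, 19, 21, 14, 16], [4, 0, 13]])])]\<rparr>"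

definition snark_6_6 :: snark_certificate where
  "snark_6_6 = \<lparr>
     vertex_count = 22,
     tree_edges = [(0, 5), (0, 13), (0, 20), (1, 12), (2, 7), (3, 8), (4, 20), (5, 8), (5, 18),
                   (6, 8), (7, 9), (7, 19), (10, 18), (11, 21), (12, 17), (12, 21), (13, 15),
                   (13, 16), (14, 19), (18, 19), (20, 21)],
     cotree_edges = [(1, 2), (1, 6), (2, 3), (3, 4), (4, 9), (6, 9), (10, 11), (10, 15),
                     (11, 16), (14, 16), (14, 17), (15, 17)],
     parents = [0, 12, 7, 8, 20, 0, 8, 19, 5, 7, 18, 21, 21, 0, 19, 13, 13, 12, 5, 18, 0, 20],
     depths = [0, 4, 5, 3, 2, 1, 3, 4, 2, 5, 3, 3, 3, 1, 4, 2, 2, 4, 2, 3, 1, 2],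
     outer_cycle_lists = [[1, 2, 3, 4, 9, 6], [10, 11, 16, 14, 17, 15]],
     colouring_order = [(1, 2), (1, 6), (1, 12), (6, 8), (6, 9), (2, 3), (2, 7), (7, 9), (4, 9),
                        (7, 19), (3, 4), (3, 8), (5, 8), (4, 20), (0, 5), (5, 18), (18, 19),
                        (10, 18), (14, 19), (0, 20), (0, 13), (20, 21), (12, 21), (12, 17),
                        (11, 21), (10, 11), (10, 15), (11, 16), (13, 15), (15, 17), (13, 16),
                        (14, 16), (14, 17)],
     linkages = [
       ((0, 5), [
          ((1, 2), [[0, 13, 15, 17, 12, 1], [0, 20, 4, 3, 2], [5, 18, 19, 7, 2], [5, 8, 6, 1]]),
          ((1, 6), [[0, 13, 15, 17, 12, 1], [0, 20, 4, 9, 6], [5, 18, 19, 7, 2, 1], [5, 8, 6]]),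
          ((2, 3), [[0, 13, 15, 17, 12, 1, 2], [0, 20, 4, 3], [5, 18, 19, 7, 2], [5, 8, 3]]),
          ((3, 4), [[0, 13, 15, 17, 12, 1, 6, 9, 4], [0, 20, 4], [5, 18, 19, 7, 2, 3], [5, 8, 3]]),
          ((4, 9), [[0, 13, 15, 17, 12, 1, 2, 3, 4], [0, 20, 4], [5, 18, 19, 7, 9], [5, 8, 6, 9]]),
          ((6, 9), [[0, 13, 15, 17, 12, 1, 6], [0, 20, 4, 9], [5, 18, 19, 7, 9], [5, 8, 6]]),
          ((10, 11), [[0, 20, 21, 11], [0, 13, 15, 10], [5, 8, 6, 1, 12, 17, 14, 16, 11], [5, 18, 10]]),
          ((10, 15), [[0, 20, 21, 11, 10], [0, 13, 15], [5, 8, 6, 1, 12, 17, 15], [5, 18, 10]]),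
          ((11, 16), [[0, 20, 21, 11], [0, 13, 16], [5, 8, 6, 1, 12, 17, 14, 16], [5, 18, 10, 11]]),
          ((14, 16), [[0, 20, 21, 11, 16], [0, 13, 16], [5, 8, 6, 1, 12, 17, 14], [5, 18, 19, 14]]),
          ((14, 17), [[0, 20, 21, 11, 16, 14], [0, 13, 15, 17], [5, 8, 6, 1, 12, 17], [5, 18, 19, 14]]),
          ((15, 17), [[0, 20, 21, 12, 17], [0, 13, 15], [5, 8, 6, 9, 7, 19, 14, 17], [5, 18, 10, 15]])]),
       ((0, 13), [
          ((1, 2), [[0, 20, 4, 3, 2], [0, 5, 8, 6, 1], [13, 16, 14, 19, 7, 2], [13, 15, 17, 12, 1]]),
          ((1, 6), [[0, 20, 4, 9, 6], [0, 5, 8, 6], [13, 16, 14, 19, 7, 2, 1], [13, 15, 17, 12, 1]]),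
          ((2, 3), [[0, 20, 4, 3], [0, 5, 8, 3], [13, 16, 14, 19, 7, 2], [13, 15, 17, 12, 1, 2]]),
          ((3, 4), [[0, 5, 8, 3], [0, 20, 4], [13, 16, 14, 19, 7, 9, 4], [13, 15, 17, 12, 1, 2, 3]]),
          ((4, 9), [[0, 5, 8, 6, 9], [0, 20, 4], [13, 15, 17, 12, 1, 2, 3, 4], [13, 16, 14, 19, 7, 9]]),
          ((6, 9), [[0, 20, 4, 9], [0, 5, 8, 6], [13, 16, 14, 19, 7, 9], [13, 15, 17, 12, 1, 6]]),
          ((10, 11), [[0, 20, 21, 11], [0, 5, 18, 10], [13, 16, 11], [13, 15, 10]]),
          ((10, 15), [[0, 20, 21, 12, 17, 15], [0, 5, 18, 10], [13, 16, 11, 10], [13, 15]]),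
          ((11, 16), [[0, 5, 18, 19, 14, 16], [0, 20, 21, 11], [13, 15, 10, 11], [13, 16]]),
          ((14, 16), [[0, 20, 21, 11, 16], [0, 5, 18, 19, 14], [13, 15, 17, 14], [13, 16]]),
          ((14, 17), [[0, 20, 21, 12, 17], [0, 5, 18, 19, 14], [13, 16, 14], [13, 15, 17]]),
          ((15, 17), [[0, 20, 21, 12, 17], [0, 5, 18, 10, 15], [13, 16, 14, 17], [13, 15]])]),
       ((0, 20), [
          ((1, 2), [[0, 13, 16, 14, 19, 7, 2], [0, 5, 8, 6, 1], [20, 21, 12, 1], [20, 4, 3, 2]]),
          ((1, 6), [[0, 13, 16, 14, 19, 7, 2, 1], [0, 5, 8, 6], [20, 21, 12, 1], [20, 4, 9, 6]]),
          ((2, 3), [[0, 13, 16, 14, 19, 7, 2], [0, 5, 8, 3], [20, 21, 12, 1, 2], [20, 4, 3]]),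
          ((3, 4), [[0, 13, 16, 14, 19, 7, 9, 4], [0, 5, 8, 3], [20, 21, 12, 1, 2, 3], [20, 4]]),
          ((4, 9), [[0, 13, 16, 14, 19, 7, 9], [0, 5, 8, 6, 9], [20, 21, 12, 1, 2, 3, 4], [20, 4]]),
          ((6, 9), [[0, 13, 16, 14, 19, 7, 9], [0, 5, 8, 6], [20, 21, 12, 1, 6], [20, 4, 9]]),
          ((10, 11), [[0, 13, 15, 10], [0, 5, 18, 10], [20, 4, 9, 7, 19, 14, 16, 11], [20, 21, 11]]),
          ((10, 15), [[0, 5, 18, 10], [0, 13, 15], [20, 4, 3, 2, 1, 12, 17, 15], [20, 21, 11, 10]]),
          ((11, 16), [[0, 5, 18, 10, 11], [0, 13, 16], [20, 4, 9, 7, 19, 14, 16], [20, 21, 11]]),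
          ((14, 16), [[0, 5, 18, 19, 14], [0, 13, 16], [20, 4, 3, 2, 1, 12, 17, 14], [20, 21, 11, 16]]),
          ((14, 17), [[0, 5, 18, 19, 14], [0, 13, 15, 17], [20, 4, 3, 2, 1, 12, 17], [20, 21, 11, 16, 14]]),
          ((15, 17), [[0, 5, 18, 10, 15], [0, 13, 15], [20, 4, 9, 7, 19, 14, 17], [20, 21, 12, 17]])]),
       ((1, 12), [
          ((2, 3), [[1, 6, 8, 3], [1, 2], [12, 17, 14, 19, 7, 2], [12, 21, 20, 4, 3]]),
          ((3, 4), [[1, 6, 8, 3], [1, 2, 3], [12, 17, 14, 19, 7, 9, 4], [12, 21, 20, 4]]),
          ((4, 9), [[1, 2, 3, 4], [1, 6, 9], [12, 17, 14, 19, 7, 9], [12, 21, 20, 4]]),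
          ((6, 9), [[1, 2, 7, 9], [1, 6], [12, 17, 15, 13, 0, 5, 8, 6], [12, 21, 20, 4, 9]]),
          ((10, 11), [[1, 6, 8, 5, 0, 13, 16, 11], [1, 2, 7, 19, 18, 10], [12, 17, 15, 10], [12, 21, 11]]),
          ((10, 15), [[1, 6, 8, 5, 0, 13, 15], [1, 2, 7, 19, 18, 10], [12, 21, 11, 10], [12, 17, 15]]),
          ((11, 16), [[1, 6, 8, 5, 0, 13, 16], [1, 2, 7, 19, 18, 10, 11], [12, 17, 14, 16], [12, 21, 11]]),
          ((14, 16), [[1, 6, 8, 5, 0, 13, 16], [1, 2, 7, 19, 14], [12, 21, 11, 16], [12, 17, 14]]),
          ((14, 17), [[1, 6, 8, 5, 0, 13, 15, 17], [1, 2, 7, 19, 14], [12, 21, 11, 16, 14], [12, 17]]),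
          ((15, 17), [[1, 6, 8, 5, 0, 13, 15], [1, 2, 7, 19, 14, 17], [12, 21, 11, 10, 15], [12, 17]])])]\<rparr>"

definition snark_6_7 :: snark_certificate where
  "snark_6_7 = \<lparr>
     vertex_count = 24,
     tree_edges = [(0, 4), (0, 13), (0, 20), (1, 12), (2, 7), (3, 8), (5, 18), (5, 20), (5, 22),
                   (6, 8), (7, 9), (7, 23), (8, 22), (10, 15), (11, 12), (12, 17), (13, 15),
                   (13, 16), (14, 17), (15, 17), (19, 23), (20, 21), (22, 23)],
     cotree_edges = [(1, 2), (1, 6), (2, 3), (3, 4), (4, 9), (6, 9), (10, 11), (10, 18),
                     (11, 16), (14, 16), (14, 21), (18, 19), (19, 21)],
     parents = [0, 12, 7, 8, 0, 20, 8, 23, 22, 7, 15, 12, 17, 0, 17, 13, 13, 15, 5, 23, 0, 20,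
                5, 22],
     depths = [0, 5, 6, 5, 1, 2, 5, 5, 4, 6, 3, 5, 4, 1, 4, 2, 2, 3, 3, 5, 1, 2, 3, 4],
     outer_cycle_lists = [[1, 2, 3, 4, 9, 6], [10, 11, 16, 14, 21, 19, 18]],
     colouring_order = [(5, 18), (10, 18), (18, 19), (10, 11), (10, 15), (13, 15), (15, 17),
                        (11, 12), (11, 16), (13, 16), (14, 16), (0, 13), (12, 17), (14, 17),
                        (1, 12), (14, 21), (19, 21), (20, 21), (19, 23), (0, 20), (5, 20),
                        (0, 4), (5, 22), (22, 23), (8, 22), (7, 23), (1, 2), (1, 6), (6, 8),
                        (3, 8), (6, 9), (2, 3), (2, 7), (7, 9), (3, 4), (4, 9)],
     linkages = [
       ((0, 4), [
          ((1, 2), [[0, 20, 5, 22, 8, 6, 1], [0, 13, 15, 17, 12, 1], [4, 9, 7, 2], [4, 3, 2]]),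
          ((1, 6), [[0, 20, 5, 22, 8, 6], [0, 13, 15, 17, 12, 1], [4, 3, 2, 1], [4, 9, 6]]),
          ((2, 3), [[0, 13, 15, 17, 12, 1, 2], [0, 20, 5, 22, 8, 3], [4, 9, 7, 2], [4, 3]]),
          ((6, 9), [[0, 20, 5, 22, 23, 7, 9], [0, 13, 15, 17, 12, 1, 6], [4, 3, 8, 6], [4, 9]]),
          ((10, 11), [[0, 20, 5, 18, 10], [0, 13, 15, 10], [4, 9, 7, 23, 19, 21, 14, 16, 11], [4, 3, 2, 1, 12, 11]]),
          ((10, 18), [[0, 20, 5, 18], [0, 13, 15, 10], [4, 3, 2, 1, 12, 11, 10], [4, 9, 7, 23, 19, 18]]),
          ((11, 16), [[0, 20, 21, 14, 16], [0, 13, 16], [4, 9, 7, 23, 19, 18, 10, 11], [4, 3, 2, 1, 12, 11]]),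
          ((14, 16), [[0, 20, 21, 14], [0, 13, 16], [4, 9, 7, 23, 19, 18, 10, 15, 17, 14], [4, 3, 2, 1, 12, 11, 16]]),
          ((14, 21), [[0, 13, 16, 14], [0, 20, 21], [4, 3, 2, 1, 12, 17, 14], [4, 9, 7, 23, 19, 21]]),
          ((18, 19), [[0, 13, 15, 10, 18], [0, 20, 21, 19], [4, 3, 8, 22, 5, 18], [4, 9, 7, 23, 19]]),
          ((19, 21), [[0, 13, 16, 14, 21], [0, 20, 21], [4, 3, 8, 22, 5, 18, 19], [4, 9, 7, 23, 19]])]),
       ((0, 13), [
          ((1, 2), [[0, 20, 5, 22, 8, 6, 1], [0, 4, 3, 2], [13, 16, 14, 21, 19, 23, 7, 2], [13, 15, 17, 12, 1]]),
          ((1, 6), [[0, 20, 5, 22, 8, 6], [0, 4, 9, 6], [13, 16, 14, 21, 19, 23, 7, 2, 1], [13, 15, 17, 12, 1]]),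
          ((2, 3), [[0, 20, 5, 22, 8, 3], [0, 4, 3], [13, 16, 14, 21, 19, 23, 7, 2], [13, 15, 17, 12, 1, 2]]),
          ((3, 4), [[0, 20, 5, 22, 8, 3], [0, 4], [13, 16, 14, 21, 19, 23, 7, 9, 4], [13, 15, 17, 12, 1, 2, 3]]),
          ((4, 9), [[0, 20, 5, 22, 8, 6, 9], [0, 4], [13, 16, 11, 12, 1, 2, 3, 4], [13, 15, 10, 18, 19, 23, 7, 9]]),
          ((6, 9), [[0, 20, 5, 22, 8, 6], [0, 4, 9], [13, 16, 14, 21, 19, 23, 7, 9], [13, 15, 17, 12, 1, 6]]),
          ((10, 11), [[0, 4, 3, 2, 1, 12, 11], [0, 20, 5, 18, 10], [13, 16, 11], [13, 15, 10]]),
          ((10, 18), [[0, 4, 9, 7, 23, 19, 18], [0, 20, 5, 18], [13, 16, 11, 10], [13, 15, 10]]),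
          ((11, 16), [[0, 4, 3, 2, 1, 12, 11], [0, 20, 21, 14, 16], [13, 15, 10, 11], [13, 16]]),
          ((14, 16), [[0, 4, 3, 2, 1, 12, 11, 16], [0, 20, 21, 14], [13, 15, 17, 14], [13, 16]]),
          ((14, 21), [[0, 4, 9, 7, 23, 19, 21], [0, 20, 21], [13, 15, 17, 14], [13, 16, 14]]),
          ((18, 19), [[0, 4, 9, 7, 23, 19], [0, 20, 5, 18], [13, 16, 14, 21, 19], [13, 15, 10, 18]]),
          ((19, 21), [[0, 4, 9, 7, 23, 19], [0, 20, 21], [13, 15, 10, 18, 19], [13, 16, 14, 21]])]),
       ((0, 20), [
          ((1, 2), [[0, 13, 15, 17, 12, 1], [0, 4, 3, 2], [20, 21, 19, 23, 7, 2], [20, 5, 22, 8, 6, 1]]),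
          ((1, 6), [[0, 13, 15, 17, 12, 1], [0, 4, 9, 6], [20, 21, 19, 23, 7, 2, 1], [20, 5, 22, 8, 6]]),
          ((2, 3), [[0, 13, 15, 17, 12, 1, 2], [0, 4, 3], [20, 21, 19, 23, 7, 2], [20, 5, 22, 8, 3]]),
          ((3, 4), [[0, 13, 15, 17, 12, 1, 6, 9, 4], [0, 4], [20, 21, 19, 23, 7, 2, 3], [20, 5, 22, 8, 3]]),
          ((4, 9), [[0, 13, 15, 17, 12, 1, 2, 3, 4], [0, 4], [20, 21, 19, 23, 7, 9], [20, 5, 22, 8, 6, 9]]),
          ((6, 9), [[0, 13, 15, 17, 12, 1, 6], [0, 4, 9], [20, 21, 19, 23, 7, 9], [20, 5, 22, 8, 6]]),
          ((10, 11), [[0, 4, 3, 2, 1, 12, 11], [0, 13, 15, 10], [20, 21, 14, 16, 11], [20, 5, 18, 10]]),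
          ((10, 18), [[0, 4, 3, 2, 1, 12, 11, 10], [0, 13, 15, 10], [20, 21, 19, 18], [20, 5, 18]]),
          ((11, 16), [[0, 4, 3, 2, 1, 12, 11], [0, 13, 16], [20, 5, 18, 10, 11], [20, 21, 14, 16]]),
          ((14, 16), [[0, 4, 3, 2, 1, 12, 17, 14], [0, 13, 16], [20, 5, 18, 10, 11, 16], [20, 21, 14]]),
          ((14, 21), [[0, 4, 3, 2, 1, 12, 17, 14], [0, 13, 16, 14], [20, 5, 18, 19, 21], [20, 21]]),
          ((18, 19), [[0, 4, 9, 7, 23, 19], [0, 13, 15, 10, 18], [20, 21, 19], [20, 5, 18]]),
          ((19, 21), [[0, 4, 9, 7, 23, 19], [0, 13, 16, 14, 21], [20, 5, 18, 19], [20, 21]])]),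
       ((1, 12), [
          ((2, 3), [[1, 6, 8, 3], [1, 2], [12, 17, 14, 21, 19, 23, 7, 2], [12, 11, 16, 13, 0, 4, 3]]),
          ((3, 4), [[1, 6, 8, 3], [1, 2, 3], [12, 17, 14, 21, 19, 23, 7, 9, 4], [12, 11, 16, 13, 0, 4]]),
          ((4, 9), [[1, 2, 3, 4], [1, 6, 9], [12, 17, 14, 21, 19, 23, 7, 9], [12, 11, 16, 13, 0, 4]]),
          ((6, 9), [[1, 2, 7, 9], [1, 6], [12, 17, 15, 10, 18, 5, 22, 8, 6], [12, 11, 16, 13, 0, 4, 9]]),
          ((10, 11), [[1, 6, 9, 4, 0, 13, 16, 11], [1, 2, 7, 23, 19, 18, 10], [12, 17, 15, 10], [12, 11]]),
          ((10, 18), [[1, 6, 8, 22, 5, 18], [1, 2, 7, 23, 19, 18], [12, 17, 15, 10], [12, 11, 10]]),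
          ((11, 16), [[1, 6, 8, 22, 5, 18, 10, 11], [1, 2, 3, 4, 0, 13, 16], [12, 17, 14, 16], [12, 11]]),
          ((14, 16), [[1, 6, 8, 22, 5, 20, 21, 14], [1, 2, 3, 4, 0, 13, 16], [12, 17, 14], [12, 11, 16]]),
          ((14, 21), [[1, 6, 8, 22, 5, 20, 21], [1, 2, 7, 23, 19, 21], [12, 11, 16, 14], [12, 17, 14]]),
          ((18, 19), [[1, 6, 8, 22, 5, 18], [1, 2, 7, 23, 19], [12, 17, 14, 21, 19], [12, 11, 10, 18]]),
          ((19, 21), [[1, 6, 8, 22, 5, 20, 21], [1, 2, 7, 23, 19], [12, 11, 10, 18, 19], [12, 17, 14, 21]])])]\<rparr>"

definition snark_6_8 :: snark_certificate where
  "snark_6_8 = \<lparr>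
     vertex_count = 26,
     tree_edges = [(0, 4), (0, 13), (0, 22), (1, 23), (2, 7), (3, 8), (5, 8), (5, 21), (5, 22),
                   (6, 8), (7, 19), (7, 20), (9, 25), (10, 15), (11, 16), (12, 23), (13, 15),
                   (13, 16), (14, 16), (15, 17), (18, 21), (20, 21), (20, 25), (22, 23),
                   (24, 25)],
     cotree_edges = [(1, 2), (1, 6), (2, 3), (3, 4), (4, 9), (6, 9), (10, 11), (10, 18),
                     (11, 12), (12, 17), (14, 17), (14, 24), (18, 19), (19, 24)],
     parents = [0, 23, 7, 8, 0, 22, 8, 20, 5, 25, 15, 16, 23, 0, 16, 13, 13, 15, 21, 7, 21, 5,
                0, 22, 25, 20],
     depths = [0, 3, 6, 4, 1, 2, 4, 5, 3, 6, 3, 3, 3, 1, 3, 2, 2, 3, 4, 6, 4, 3, 1, 2, 6, 5],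
     outer_cycle_lists = [[1, 2, 3, 4, 9, 6], [10, 11, 12, 17, 14, 24, 19, 18]],
     colouring_order = [(10, 11), (10, 15), (10, 18), (13, 15), (15, 17), (11, 12), (11, 16),
                        (13, 16), (14, 16), (0, 13), (12, 17), (14, 17), (12, 23), (14, 24),
                        (0, 4), (0, 22), (22, 23), (5, 22), (1, 23), (1, 2), (1, 6), (6, 8),
                        (6, 9), (5, 8), (3, 8), (5, 21), (2, 3), (3, 4), (4, 9), (2, 7),
                        (9, 25), (18, 21), (18, 19), (20, 21), (7, 19), (7, 20), (19, 24),
                        (20, 25), (24, 25)],
     linkages = [
       ((0, 4), [
          ((1, 2), [[0, 13, 15, 10, 18, 19, 7, 2], [0, 22, 23, 1], [4, 9, 6, 1], [4, 3, 2]]),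
          ((1, 6), [[0, 13, 15, 10, 18, 21, 5, 8, 6], [0, 22, 23, 1], [4, 3, 2, 1], [4, 9, 6]]),
          ((2, 3), [[0, 13, 15, 10, 18, 19, 7, 2], [0, 22, 5, 8, 3], [4, 9, 6, 1, 2], [4, 3]]),
          ((6, 9), [[0, 13, 16, 14, 24, 25, 9], [0, 22, 23, 1, 6], [4, 3, 8, 6], [4, 9]]),
          ((10, 11), [[0, 22, 23, 12, 11], [0, 13, 15, 10], [4, 9, 25, 24, 14, 16, 11], [4, 3, 2, 7, 19, 18, 10]]),
          ((10, 18), [[0, 22, 5, 21, 18], [0, 13, 15, 10], [4, 9, 6, 1, 23, 12, 11, 10], [4, 3, 2, 7, 19, 18]]),
          ((11, 12), [[0, 22, 23, 12], [0, 13, 16, 11], [4, 3, 2, 7, 19, 18, 10, 11], [4, 9, 25, 24, 14, 17, 12]]),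
          ((12, 17), [[0, 22, 23, 12], [0, 13, 15, 17], [4, 3, 2, 7, 19, 18, 10, 11, 12], [4, 9, 25, 24, 14, 17]]),
          ((14, 17), [[0, 22, 23, 12, 17], [0, 13, 15, 17], [4, 3, 2, 7, 19, 18, 10, 11, 16, 14], [4, 9, 25, 24, 14]]),
          ((14, 24), [[0, 22, 23, 12, 17, 14], [0, 13, 16, 14], [4, 3, 2, 7, 19, 24], [4, 9, 25, 24]]),
          ((18, 19), [[0, 22, 5, 21, 18], [0, 13, 15, 10, 18], [4, 9, 25, 24, 19], [4, 3, 2, 7, 19]]),
          ((19, 24), [[0, 22, 5, 21, 18, 19], [0, 13, 16, 14, 24], [4, 3, 2, 7, 19], [4, 9, 25, 24]])]),
       ((0, 13), [
          ((1, 2), [[0, 22, 23, 1], [0, 4, 3, 2], [13, 16, 14, 24, 25, 9, 6, 1], [13, 15, 10, 18, 19, 7, 2]]),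
          ((1, 6), [[0, 22, 5, 8, 6], [0, 4, 9, 6], [13, 16, 11, 12, 23, 1], [13, 15, 10, 18, 19, 7, 2, 1]]),
          ((2, 3), [[0, 22, 5, 8, 3], [0, 4, 3], [13, 16, 11, 12, 23, 1, 2], [13, 15, 10, 18, 19, 7, 2]]),
          ((3, 4), [[0, 22, 5, 8, 3], [0, 4], [13, 15, 10, 18, 19, 7, 2, 3], [13, 16, 14, 24, 25, 9, 4]]),
          ((4, 9), [[0, 22, 5, 8, 6, 9], [0, 4], [13, 15, 10, 18, 19, 7, 2, 3, 4], [13, 16, 14, 24, 25, 9]]),
          ((6, 9), [[0, 22, 5, 8, 6], [0, 4, 9], [13, 15, 17, 12, 23, 1, 6], [13, 16, 14, 24, 25, 9]]),
          ((10, 11), [[0, 4, 3, 2, 7, 19, 18, 10], [0, 22, 23, 12, 11], [13, 16, 11], [13, 15, 10]]),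
          ((10, 18), [[0, 4, 3, 2, 7, 19, 18], [0, 22, 5, 21, 18], [13, 16, 11, 10], [13, 15, 10]]),
          ((11, 12), [[0, 4, 9, 25, 24, 14, 17, 12], [0, 22, 23, 12], [13, 15, 10, 11], [13, 16, 11]]),
          ((12, 17), [[0, 4, 9, 25, 24, 14, 17], [0, 22, 23, 12], [13, 16, 11, 12], [13, 15, 17]]),
          ((14, 17), [[0, 4, 9, 25, 24, 14], [0, 22, 23, 12, 17], [13, 16, 14], [13, 15, 17]]),
          ((14, 24), [[0, 22, 5, 21, 18, 19, 24], [0, 4, 9, 25, 24], [13, 15, 17, 14], [13, 16, 14]]),
          ((18, 19), [[0, 4, 3, 2, 7, 19], [0, 22, 5, 21, 18], [13, 16, 14, 24, 19], [13, 15, 10, 18]]),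
          ((19, 24), [[0, 22, 5, 21, 20, 7, 19], [0, 4, 9, 25, 24], [13, 15, 10, 18, 19], [13, 16, 14, 24]])]),
       ((0, 22), [
          ((1, 2), [[0, 13, 15, 10, 18, 19, 7, 2], [0, 4, 3, 2], [22, 5, 8, 6, 1], [22, 23, 1]]),
          ((1, 6), [[0, 13, 15, 10, 18, 19, 7, 2, 1], [0, 4, 9, 6], [22, 5, 8, 6], [22, 23, 1]]),
          ((2, 3), [[0, 13, 15, 10, 18, 19, 7, 2], [0, 4, 3], [22, 23, 1, 2], [22, 5, 8, 3]]),
          ((3, 4), [[0, 13, 16, 14, 24, 25, 9, 4], [0, 4], [22, 23, 1, 2, 3], [22, 5, 8, 3]]),
          ((4, 9), [[0, 13, 16, 14, 24, 25, 9], [0, 4], [22, 23, 1, 2, 3, 4], [22, 5, 8, 6, 9]]),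
          ((6, 9), [[0, 13, 16, 14, 24, 25, 9], [0, 4, 9], [22, 23, 1, 6], [22, 5, 8, 6]]),
          ((10, 11), [[0, 4, 9, 25, 24, 14, 16, 11], [0, 13, 15, 10], [22, 5, 21, 18, 10], [22, 23, 12, 11]]),
          ((10, 18), [[0, 4, 3, 2, 7, 19, 18], [0, 13, 15, 10], [22, 23, 12, 11, 10], [22, 5, 21, 18]]),
          ((11, 12), [[0, 4, 9, 25, 24, 14, 17, 12], [0, 13, 16, 11], [22, 5, 21, 18, 10, 11], [22, 23, 12]]),
          ((12, 17), [[0, 4, 9, 25, 24, 14, 17], [0, 13, 15, 17], [22, 5, 21, 18, 10, 11, 12], [22, 23, 12]]),
          ((14, 17), [[0, 4, 9, 25, 24, 14], [0, 13, 15, 17], [22, 5, 21, 18, 10, 11, 16, 14], [22, 23, 12, 17]]),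
          ((14, 24), [[0, 4, 9, 25, 24], [0, 13, 16, 14], [22, 5, 21, 18, 19, 24], [22, 23, 12, 17, 14]]),
          ((18, 19), [[0, 4, 3, 2, 7, 19], [0, 13, 15, 10, 18], [22, 23, 12, 17, 14, 24, 19], [22, 5, 21, 18]]),
          ((19, 24), [[0, 13, 16, 14, 24], [0, 4, 9, 25, 24], [22, 23, 1, 2, 7, 19], [22, 5, 21, 18, 19]])]),
       ((1, 23), [
          ((2, 3), [[1, 6, 8, 3], [1, 2], [23, 12, 11, 10, 18, 19, 7, 2], [23, 22, 0, 4, 3]]),
          ((3, 4), [[1, 6, 8, 3], [1, 2, 3], [23, 12, 17, 14, 24, 25, 9, 4], [23, 22, 0, 4]]),
          ((4, 9), [[1, 2, 3, 4], [1, 6, 9], [23, 12, 17, 14, 24, 25, 9], [23, 22, 0, 4]]),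
          ((6, 9), [[1, 2, 3, 4, 9], [1, 6], [23, 12, 17, 14, 24, 25, 9], [23, 22, 5, 8, 6]]),
          ((10, 11), [[1, 6, 9, 25, 24, 14, 16, 11], [1, 2, 7, 19, 18, 10], [23, 22, 0, 13, 15, 10], [23, 12, 11]]),
          ((10, 18), [[1, 6, 9, 4, 0, 13, 15, 10], [1, 2, 7, 19, 18], [23, 22, 5, 21, 18], [23, 12, 11, 10]]),
          ((11, 12), [[1, 6, 9, 25, 24, 14, 17, 12], [1, 2, 7, 19, 18, 10, 11], [23, 22, 0, 13, 16, 11], [23, 12]]),
          ((12, 17), [[1, 6, 8, 5, 21, 18, 10, 11, 12], [1, 2, 7, 19, 24, 14, 17], [23, 22, 0, 13, 15, 17], [23, 12]]),
          ((14, 17), [[1, 6, 8, 5, 21, 18, 10, 11, 16, 14], [1, 2, 7, 19, 24, 14], [23, 22, 0, 13, 15, 17], [23, 12, 17]]),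
          ((14, 24), [[1, 6, 9, 25, 24], [1, 2, 7, 19, 24], [23, 22, 0, 13, 16, 14], [23, 12, 17, 14]]),
          ((18, 19), [[1, 6, 9, 25, 24, 19], [1, 2, 7, 19], [23, 22, 5, 21, 18], [23, 12, 11, 10, 18]]),
          ((19, 24), [[1, 6, 9, 25, 24], [1, 2, 7, 19], [23, 22, 5, 21, 18, 19], [23, 12, 17, 14, 24]])])]\<rparr>"

definition snark_7_7 :: snark_certificate where
  "snark_7_7 = \<lparr>
     vertex_count = 26,
     tree_edges = [(0, 13), (1, 2), (1, 6), (1, 23), (2, 3), (2, 7), (3, 4), (3, 8), (5, 21),
                   (7, 19), (7, 20), (9, 25), (10, 15), (11, 12), (12, 17), (12, 23), (13, 15),
                   (13, 16), (14, 17), (15, 17), (18, 21), (20, 21), (20, 25), (22, 23),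
                   (24, 25)],
     cotree_edges = [(0, 4), (0, 22), (4, 9), (5, 8), (5, 22), (6, 8), (6, 9), (10, 11),
                     (10, 18), (11, 16), (14, 16), (14, 24), (18, 19), (19, 24)],
     parents = [0, 23, 1, 2, 3, 21, 1, 2, 3, 25, 15, 12, 17, 0, 17, 13, 13, 15, 21, 7, 7, 20,
                23, 12, 25, 20],
     depths = [0, 6, 7, 8, 9, 11, 7, 8, 9, 11, 3, 5, 4, 1, 4, 2, 2, 3, 11, 9, 9, 10, 6, 5, 11,
               10],
     outer_cycle_lists = [[0, 4, 9, 6, 8, 5, 22], [10, 11, 16, 14, 24, 19, 18]],
     colouring_order = [(10, 11), (10, 15), (10, 18), (13, 15), (15, 17), (11, 12), (11, 16),
                        (13, 16), (14, 16), (0, 13), (12, 17), (14, 17), (12, 23), (14, 24),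
                        (0, 4), (0, 22), (22, 23), (5, 22), (1, 23), (1, 2), (1, 6), (6, 8),
                        (6, 9), (5, 8), (3, 8), (5, 21), (2, 3), (3, 4), (4, 9), (2, 7),
                        (9, 25), (18, 21), (18, 19), (20, 21), (7, 19), (7, 20), (19, 24),
                        (20, 25), (24, 25)],
     linkages = [
       ((0, 13), [
          ((4, 9), [[0, 22, 5, 8, 6, 9], [0, 4], [13, 15, 10, 18, 19, 7, 2, 3, 4], [13, 16, 14, 24, 25, 9]]),
          ((5, 8), [[0, 4, 3, 8], [0, 22, 5], [13, 16, 14, 24, 25, 9, 6, 8], [13, 15, 10, 18, 21, 5]]),
          ((5, 22), [[0, 4, 3, 8, 5], [0, 22], [13, 16, 11, 12, 23, 22], [13, 15, 10, 18, 21, 5]]),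
          ((6, 8), [[0, 22, 5, 8], [0, 4, 3, 8], [13, 16, 14, 24, 25, 9, 6], [13, 15, 17, 12, 23, 1, 6]]),
          ((6, 9), [[0, 22, 5, 8, 6], [0, 4, 9], [13, 15, 17, 12, 23, 1, 6], [13, 16, 14, 24, 25, 9]]),
          ((10, 11), [[0, 4, 3, 2, 7, 19, 18, 10], [0, 22, 23, 12, 11], [13, 16, 11], [13, 15, 10]]),
          ((10, 18), [[0, 4, 3, 2, 7, 19, 18], [0, 22, 5, 21, 18], [13, 16, 11, 10], [13, 15, 10]]),
          ((11, 16), [[0, 4, 9, 25, 24, 14, 16], [0, 22, 23, 12, 11], [13, 15, 10, 11], [13, 16]]),
          ((14, 16), [[0, 22, 23, 12, 11, 16], [0, 4, 9, 25, 24, 14], [13, 15, 17, 14], [13, 16]]),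
          ((14, 24), [[0, 22, 5, 21, 18, 19, 24], [0, 4, 9, 25, 24], [13, 15, 17, 14], [13, 16, 14]]),
          ((18, 19), [[0, 4, 3, 2, 7, 19], [0, 22, 5, 21, 18], [13, 16, 14, 24, 19], [13, 15, 10, 18]]),
          ((19, 24), [[0, 22, 5, 21, 20, 7, 19], [0, 4, 9, 25, 24], [13, 15, 10, 18, 19], [13, 16, 14, 24]])]),
       ((1, 2), [
          ((0, 4), [[1, 23, 22, 0], [1, 6, 9, 4], [2, 7, 19, 18, 10, 15, 13, 0], [2, 3, 4]]),
          ((0, 22), [[1, 6, 8, 5, 22], [1, 23, 22], [2, 7, 19, 18, 10, 15, 13, 0], [2, 3, 4, 0]]),
          ((4, 9), [[1, 23, 22, 0, 4], [1, 6, 9], [2, 7, 20, 25, 9], [2, 3, 4]]),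
          ((5, 8), [[1, 23, 22, 5], [1, 6, 8], [2, 7, 20, 21, 5], [2, 3, 8]]),
          ((5, 22), [[1, 6, 8, 5], [1, 23, 22], [2, 7, 20, 21, 5], [2, 3, 4, 0, 22]]),
          ((6, 8), [[1, 23, 22, 5, 8], [1, 6], [2, 7, 20, 25, 9, 6], [2, 3, 8]]),
          ((6, 9), [[1, 23, 22, 5, 8, 6], [1, 6], [2, 7, 20, 25, 9], [2, 3, 4, 9]]),
          ((10, 11), [[1, 6, 9, 25, 24, 14, 16, 11], [1, 23, 12, 11], [2, 3, 4, 0, 13, 15, 10], [2, 7, 19, 18, 10]]),
          ((10, 18), [[1, 6, 8, 5, 21, 18], [1, 23, 12, 11, 10], [2, 3, 4, 0, 13, 15, 10], [2, 7, 19, 18]]),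
          ((11, 16), [[1, 6, 9, 25, 24, 14, 16], [1, 23, 12, 11], [2, 7, 19, 18, 10, 11], [2, 3, 4, 0, 13, 16]]),
          ((14, 16), [[1, 6, 8, 5, 21, 18, 10, 15, 17, 14], [1, 23, 12, 11, 16], [2, 3, 4, 0, 13, 16], [2, 7, 19, 24, 14]]),
          ((14, 24), [[1, 23, 12, 17, 14], [1, 6, 9, 25, 24], [2, 3, 4, 0, 13, 16, 14], [2, 7, 19, 24]]),
          ((18, 19), [[1, 23, 12, 11, 10, 18], [1, 6, 8, 5, 21, 18], [2, 3, 4, 9, 25, 24, 19], [2, 7, 19]]),
          ((19, 24), [[1, 23, 12, 17, 14, 24], [1, 6, 9, 25, 24], [2, 3, 8, 5, 21, 18, 19], [2, 7, 19]])]),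
       ((1, 6), [
          ((0, 4), [[1, 23, 22, 0], [1, 2, 3, 4], [6, 8, 5, 21, 18, 10, 15, 13, 0], [6, 9, 4]]),
          ((0, 22), [[1, 2, 7, 19, 18, 10, 15, 13, 0], [1, 23, 22], [6, 9, 4, 0], [6, 8, 5, 22]]),
          ((4, 9), [[1, 23, 22, 0, 4], [1, 2, 3, 4], [6, 8, 5, 21, 20, 25, 9], [6, 9]]),
          ((5, 8), [[1, 23, 22, 5], [1, 2, 3, 8], [6, 9, 25, 20, 21, 5], [6, 8]]),
          ((5, 22), [[1, 2, 7, 20, 21, 5], [1, 23, 22], [6, 9, 4, 0, 22], [6, 8, 5]]),
          ((10, 11), [[1, 2, 7, 19, 18, 10], [1, 23, 12, 11], [6, 8, 3, 4, 0, 13, 15, 10], [6, 9, 25, 24, 14, 16, 11]]),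
          ((10, 18), [[1, 23, 12, 11, 10], [1, 2, 7, 19, 18], [6, 9, 4, 0, 13, 15, 10], [6, 8, 5, 21, 18]]),
          ((11, 16), [[1, 2, 7, 19, 18, 10, 11], [1, 23, 12, 11], [6, 8, 3, 4, 0, 13, 16], [6, 9, 25, 24, 14, 16]]),
          ((14, 16), [[1, 2, 3, 4, 0, 13, 16], [1, 23, 12, 11, 16], [6, 8, 5, 21, 18, 10, 15, 17, 14], [6, 9, 25, 24, 14]]),
          ((14, 24), [[1, 23, 12, 17, 14], [1, 2, 7, 19, 24], [6, 8, 3, 4, 0, 13, 16, 14], [6, 9, 25, 24]]),
          ((18, 19), [[1, 23, 12, 11, 10, 18], [1, 2, 7, 19], [6, 9, 25, 24, 19], [6, 8, 5, 21, 18]]),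
          ((19, 24), [[1, 23, 12, 17, 14, 24], [1, 2, 7, 19], [6, 8, 5, 21, 18, 19], [6, 9, 25, 24]])]),
       ((1, 23), [
          ((0, 4), [[1, 6, 9, 4], [1, 2, 3, 4], [23, 12, 11, 16, 13, 0], [23, 22, 0]]),
          ((0, 22), [[1, 6, 8, 5, 22], [1, 2, 3, 4, 0], [23, 12, 11, 16, 13, 0], [23, 22]]),
          ((4, 9), [[1, 2, 3, 4], [1, 6, 9], [23, 12, 17, 14, 24, 25, 9], [23, 22, 0, 4]]),
          ((5, 8), [[1, 2, 3, 8], [1, 6, 8], [23, 12, 11, 10, 18, 21, 5], [23, 22, 5]]),
          ((5, 22), [[1, 2, 3, 4, 0, 22], [1, 6, 8, 5], [23, 12, 11, 10, 18, 21, 5], [23, 22]]),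
          ((6, 8), [[1, 2, 3, 8], [1, 6], [23, 12, 17, 14, 24, 25, 9, 6], [23, 22, 5, 8]]),
          ((6, 9), [[1, 2, 3, 4, 9], [1, 6], [23, 12, 17, 14, 24, 25, 9], [23, 22, 5, 8, 6]]),
          ((10, 11), [[1, 6, 9, 25, 24, 14, 16, 11], [1, 2, 7, 19, 18, 10], [23, 22, 0, 13, 15, 10], [23, 12, 11]]),
          ((10, 18), [[1, 6, 9, 4, 0, 13, 15, 10], [1, 2, 7, 19, 18], [23, 22, 5, 21, 18], [23, 12, 11, 10]]),
          ((11, 16), [[1, 6, 9, 25, 24, 14, 16], [1, 2, 7, 19, 18, 10, 11], [23, 22, 0, 13, 16], [23, 12, 11]]),
          ((14, 16), [[1, 6, 8, 5, 21, 18, 10, 15, 17, 14], [1, 2, 7, 19, 24, 14], [23, 22, 0, 13, 16], [23, 12, 11, 16]]),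
          ((14, 24), [[1, 6, 9, 25, 24], [1, 2, 7, 19, 24], [23, 22, 0, 13, 16, 14], [23, 12, 17, 14]]),
          ((18, 19), [[1, 6, 9, 25, 24, 19], [1, 2, 7, 19], [23, 22, 5, 21, 18], [23, 12, 11, 10, 18]]),
          ((19, 24), [[1, 6, 9, 25, 24], [1, 2, 7, 19], [23, 22, 5, 21, 18, 19], [23, 12, 17, 14, 24]])])]\<rparr>"

definition snark_7_8 :: snark_certificate where
  "snark_7_8 = \<lparr>
     vertex_count = 28,
     tree_edges = [(0, 24), (1, 6), (2, 7), (3, 8), (4, 9), (5, 8), (5, 21), (5, 24), (6, 8),
                   (6, 9), (7, 19), (7, 20), (9, 20), (10, 15), (11, 12), (12, 17), (12, 25),
                   (13, 15), (13, 16), (13, 22), (14, 17), (15, 17), (18, 19), (19, 26),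
                   (20, 27), (23, 25), (24, 25)],
     cotree_edges = [(0, 4), (0, 22), (1, 2), (1, 23), (2, 3), (3, 4), (10, 11), (10, 18),
                     (11, 16), (14, 16), (14, 26), (18, 21), (21, 27), (22, 23), (26, 27)],
     parents = [0, 6, 7, 8, 9, 24, 8, 20, 5, 6, 15, 12, 25, 15, 17, 17, 13, 12, 19, 7, 9, 5, 13,
                25, 0, 24, 19, 20],
     depths = [0, 5, 8, 4, 6, 2, 4, 7, 3, 5, 6, 4, 3, 6, 5, 5, 7, 4, 9, 8, 6, 3, 7, 3, 1, 2, 9,
               7],
     outer_cycle_lists = [[0, 4, 3, 2, 1, 23, 22], [10, 11, 16, 14, 26, 27, 21, 18]],
     colouring_order = [(10, 11), (10, 15), (10, 18), (13, 15), (15, 17), (11, 12), (11, 16),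
                        (13, 16), (14, 16), (13, 22), (12, 17), (14, 17), (12, 25), (14, 26),
                        (18, 19), (18, 21), (19, 26), (7, 19), (26, 27), (21, 27), (5, 21),
                        (20, 27), (7, 20), (2, 7), (9, 20), (1, 2), (2, 3), (1, 6), (1, 23),
                        (6, 9), (6, 8), (4, 9), (3, 4), (3, 8), (5, 8), (0, 4), (5, 24),
                        (0, 22), (22, 23), (0, 24), (23, 25), (24, 25)],
     linkages = [
       ((0, 24), [
          ((1, 2), [[0, 22, 23, 1], [0, 4, 3, 2], [24, 25, 12, 11, 10, 18, 19, 7, 2], [24, 5, 8, 6, 1]]),
          ((1, 23), [[0, 4, 3, 2, 1], [0, 22, 23], [24, 5, 8, 6, 1], [24, 25, 23]]),
          ((2, 3), [[0, 22, 23, 1, 2], [0, 4, 3], [24, 25, 12, 11, 10, 18, 19, 7, 2], [24, 5, 8, 3]]),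
          ((3, 4), [[0, 22, 23, 1, 2, 3], [0, 4], [24, 25, 12, 17, 14, 26, 27, 20, 9, 4], [24, 5, 8, 3]]),
          ((10, 11), [[0, 4, 9, 20, 27, 26, 14, 16, 11], [0, 22, 13, 15, 10], [24, 5, 21, 18, 10], [24, 25, 12, 11]]),
          ((10, 18), [[0, 4, 3, 2, 7, 19, 18], [0, 22, 13, 15, 10], [24, 25, 12, 11, 10], [24, 5, 21, 18]]),
          ((11, 16), [[0, 4, 9, 20, 27, 26, 14, 16], [0, 22, 13, 16], [24, 5, 21, 18, 10, 11], [24, 25, 12, 11]]),
          ((14, 16), [[0, 4, 3, 2, 7, 19, 18, 10, 15, 17, 14], [0, 22, 13, 16], [24, 5, 21, 27, 26, 14], [24, 25, 12, 11, 16]]),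
          ((14, 26), [[0, 4, 3, 2, 7, 19, 26], [0, 22, 13, 16, 14], [24, 25, 12, 17, 14], [24, 5, 21, 27, 26]]),
          ((18, 21), [[0, 22, 13, 15, 10, 18], [0, 4, 9, 20, 27, 21], [24, 25, 12, 17, 14, 26, 19, 18], [24, 5, 21]]),
          ((21, 27), [[0, 22, 13, 15, 10, 18, 21], [0, 4, 9, 20, 27], [24, 25, 12, 17, 14, 26, 27], [24, 5, 21]]),
          ((22, 23), [[0, 4, 3, 2, 1, 23], [0, 22], [24, 5, 21, 18, 10, 15, 13, 22], [24, 25, 23]]),
          ((26, 27), [[0, 22, 13, 16, 14, 26], [0, 4, 9, 20, 27], [24, 25, 12, 11, 10, 18, 19, 26], [24, 5, 21, 27]])]),
       ((1, 6), [
          ((0, 4), [[1, 23, 22, 0], [1, 2, 3, 4], [6, 8, 5, 24, 0], [6, 9, 4]]),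
          ((0, 22), [[1, 2, 7, 19, 18, 10, 15, 13, 22], [1, 23, 22], [6, 8, 5, 24, 0], [6, 9, 4, 0]]),
          ((2, 3), [[1, 23, 22, 0, 4, 3], [1, 2], [6, 9, 20, 7, 2], [6, 8, 3]]),
          ((3, 4), [[1, 23, 22, 0, 4], [1, 2, 3], [6, 9, 4], [6, 8, 3]]),
          ((10, 11), [[1, 2, 7, 19, 18, 10], [1, 23, 25, 12, 11], [6, 8, 5, 21, 27, 26, 14, 16, 11], [6, 9, 4, 0, 22, 13, 15, 10]]),
          ((10, 18), [[1, 23, 22, 13, 15, 10], [1, 2, 7, 19, 18], [6, 9, 4, 0, 24, 25, 12, 11, 10], [6, 8, 5, 21, 18]]),
          ((11, 16), [[1, 2, 7, 19, 18, 10, 11], [1, 23, 22, 13, 16], [6, 9, 20, 27, 26, 14, 16], [6, 8, 5, 24, 25, 12, 11]]),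
          ((14, 16), [[1, 2, 7, 19, 26, 14], [1, 23, 22, 13, 16], [6, 9, 4, 0, 24, 25, 12, 17, 14], [6, 8, 5, 21, 18, 10, 11, 16]]),
          ((14, 26), [[1, 23, 22, 13, 16, 14], [1, 2, 7, 19, 26], [6, 8, 5, 24, 25, 12, 17, 14], [6, 9, 20, 27, 26]]),
          ((18, 21), [[1, 23, 22, 13, 15, 10, 18], [1, 2, 7, 19, 18], [6, 9, 20, 27, 21], [6, 8, 5, 21]]),
          ((21, 27), [[1, 23, 22, 13, 16, 14, 26, 27], [1, 2, 7, 19, 18, 21], [6, 9, 20, 27], [6, 8, 5, 21]]),
          ((22, 23), [[1, 2, 7, 19, 18, 10, 15, 13, 22], [1, 23], [6, 8, 5, 24, 25, 23], [6, 9, 4, 0, 22]]),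
          ((26, 27), [[1, 23, 22, 13, 16, 14, 26], [1, 2, 7, 19, 26], [6, 8, 5, 21, 27], [6, 9, 20, 27]])]),
       ((2, 7), [
          ((0, 4), [[2, 1, 23, 22, 0], [2, 3, 4], [7, 19, 18, 21, 5, 24, 0], [7, 20, 9, 4]]),
          ((0, 22), [[2, 3, 4, 0], [2, 1, 23, 22], [7, 20, 27, 21, 5, 24, 0], [7, 19, 18, 10, 15, 13, 22]]),
          ((1, 23), [[2, 3, 8, 6, 1], [2, 1], [7, 19, 18, 10, 11, 12, 25, 23], [7, 20, 9, 4, 0, 22, 23]]),
          ((3, 4), [[2, 1, 6, 8, 3], [2, 3], [7, 19, 18, 21, 5, 24, 0, 4], [7, 20, 9, 4]]),
          ((10, 11), [[2, 3, 4, 0, 22, 13, 15, 10], [2, 1, 23, 25, 12, 11], [7, 20, 27, 26, 14, 16, 11], [7, 19, 18, 10]]),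
          ((10, 18), [[2, 3, 4, 0, 24, 25, 12, 11, 10], [2, 1, 23, 22, 13, 15, 10], [7, 20, 27, 21, 18], [7, 19, 18]]),
          ((11, 16), [[2, 3, 4, 0, 24, 25, 12, 11], [2, 1, 23, 22, 13, 16], [7, 20, 27, 26, 14, 16], [7, 19, 18, 10, 11]]),
          ((14, 16), [[2, 3, 4, 0, 24, 25, 12, 17, 14], [2, 1, 23, 22, 13, 16], [7, 20, 27, 21, 18, 10, 11, 16], [7, 19, 26, 14]]),
          ((14, 26), [[2, 3, 4, 0, 24, 25, 12, 17, 14], [2, 1, 23, 22, 13, 16, 14], [7, 20, 27, 26], [7, 19, 26]]),
          ((18, 21), [[2, 1, 23, 22, 13, 15, 10, 18], [2, 3, 8, 5, 21], [7, 20, 27, 21], [7, 19, 18]]),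
          ((21, 27), [[2, 1, 23, 22, 13, 16, 14, 26, 27], [2, 3, 8, 5, 21], [7, 19, 18, 21], [7, 20, 27]]),
          ((22, 23), [[2, 3, 4, 0, 22], [2, 1, 23], [7, 20, 27, 21, 5, 24, 25, 23], [7, 19, 18, 10, 15, 13, 22]]),
          ((26, 27), [[2, 1, 23, 22, 13, 16, 14, 26], [2, 3, 8, 5, 21, 27], [7, 20, 27], [7, 19, 26]])]),
       ((3, 8), [
          ((0, 4), [[3, 2, 1, 23, 22, 0], [3, 4], [8, 5, 24, 0], [8, 6, 9, 4]]),
          ((0, 22), [[3, 2, 1, 23, 22], [3, 4, 0], [8, 6, 9, 20, 27, 26, 14, 16, 13, 22], [8, 5, 24, 0]]),
          ((1, 2), [[3, 4, 0, 22, 23, 1], [3, 2], [8, 5, 21, 18, 19, 7, 2], [8, 6, 1]]),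
          ((1, 23), [[3, 4, 0, 22, 23], [3, 2, 1], [8, 5, 24, 25, 23], [8, 6, 1]]),
          ((10, 11), [[3, 4, 0, 22, 13, 15, 10], [3, 2, 1, 23, 25, 12, 11], [8, 6, 9, 20, 27, 26, 14, 16, 11], [8, 5, 21, 18, 10]]),
          ((10, 18), [[3, 4, 0, 22, 13, 15, 10], [3, 2, 7, 19, 18], [8, 6, 1, 23, 25, 12, 11, 10], [8, 5, 21, 18]]),
          ((11, 16), [[3, 2, 1, 23, 25, 12, 11], [3, 4, 0, 22, 13, 16], [8, 6, 9, 20, 27, 26, 14, 16], [8, 5, 21, 18, 10, 11]]),
          ((14, 16), [[3, 4, 0, 22, 13, 16], [3, 2, 7, 19, 26, 14], [8, 6, 1, 23, 25, 12, 17, 14], [8, 5, 21, 18, 10, 11, 16]]),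
          ((14, 26), [[3, 4, 0, 22, 13, 16, 14], [3, 2, 7, 19, 26], [8, 6, 1, 23, 25, 12, 17, 14], [8, 5, 21, 27, 26]]),
          ((18, 21), [[3, 4, 9, 20, 27, 21], [3, 2, 7, 19, 18], [8, 6, 1, 23, 22, 13, 15, 10, 18], [8, 5, 21]]),
          ((21, 27), [[3, 4, 9, 20, 27], [3, 2, 7, 19, 18, 21], [8, 6, 1, 23, 22, 13, 16, 14, 26, 27], [8, 5, 21]]),
          ((22, 23), [[3, 4, 0, 22], [3, 2, 1, 23], [8, 6, 9, 20, 27, 26, 14, 16, 13, 22], [8, 5, 24, 25, 23]]),
          ((26, 27), [[3, 4, 9, 20, 27], [3, 2, 7, 19, 26], [8, 6, 1, 23, 22, 13, 16, 14, 26], [8, 5, 21, 27]])])]\<rparr>"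

definition snark_8_8 :: snark_certificate where
  "snark_8_8 = \<lparr>
     vertex_count = 30,
     tree_edges = [(0, 24), (1, 2), (2, 3), (2, 7), (4, 9), (5, 8), (5, 21), (5, 24), (6, 9),
                   (7, 19), (7, 20), (9, 27), (10, 15), (11, 12), (12, 17), (12, 25), (13, 15),
                   (13, 16), (13, 22), (14, 17), (15, 17), (18, 21), (20, 21), (20, 27),
                   (23, 25), (24, 25), (26, 29), (27, 29), (28, 29)],
     cotree_edges = [(0, 4), (0, 22), (1, 6), (1, 23), (3, 4), (3, 8), (6, 8), (10, 11),
                     (10, 28), (11, 16), (14, 16), (14, 26), (18, 19), (18, 28), (19, 26),
                     (22, 23)],
     parents = [0, 2, 7, 2, 9, 24, 9, 20, 5, 27, 15, 12, 25, 15, 17, 17, 13, 12, 21, 7, 21, 5,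
                13, 25, 0, 24, 29, 20, 29, 27],
     depths = [0, 7, 6, 7, 7, 2, 7, 5, 3, 6, 6, 4, 3, 6, 5, 5, 7, 4, 4, 6, 4, 3, 7, 3, 1, 2, 7,
               5, 7, 6],
     outer_cycle_lists = [[0, 4, 3, 8, 6, 1, 23, 22], [10, 11, 16, 14, 26, 19, 18, 28]],
     colouring_order = [(10, 11), (10, 15), (10, 28), (13, 15), (15, 17), (11, 12), (11, 16),
                        (13, 16), (14, 16), (13, 22), (12, 17), (14, 17), (12, 25), (14, 26),
                        (0, 22), (22, 23), (23, 25), (1, 23), (24, 25), (0, 24), (0, 4),
                        (5, 24), (1, 2), (1, 6), (6, 8), (6, 9), (5, 8), (3, 8), (5, 21),
                        (2, 3), (3, 4), (4, 9), (2, 7), (9, 27), (7, 19), (7, 20), (20, 21),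
                        (20, 27), (18, 21), (27, 29), (18, 19), (19, 26), (18, 28), (26, 29),
                        (28, 29)],
     linkages = [
       ((0, 24), [
          ((1, 6), [[0, 22, 23, 1], [0, 4, 9, 6], [24, 25, 12, 17, 14, 26, 19, 7, 2, 1], [24, 5, 8, 6]]),
          ((1, 23), [[0, 4, 3, 2, 1], [0, 22, 23], [24, 5, 8, 6, 1], [24, 25, 23]]),
          ((3, 4), [[0, 22, 23, 1, 2, 3], [0, 4], [24, 25, 12, 11, 10, 28, 29, 27, 9, 4], [24, 5, 8, 3]]),
          ((3, 8), [[0, 22, 23, 1, 2, 3], [0, 4, 3], [24, 25, 12, 11, 10, 28, 29, 27, 9, 6, 8], [24, 5, 8]]),
          ((6, 8), [[0, 22, 23, 1, 6], [0, 4, 3, 8], [24, 25, 12, 11, 10, 28, 29, 27, 9, 6], [24, 5, 8]]),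
          ((10, 11), [[0, 4, 9, 27, 29, 26, 14, 16, 11], [0, 22, 13, 15, 10], [24, 5, 21, 18, 28, 10], [24, 25, 12, 11]]),
          ((10, 28), [[0, 4, 9, 27, 29, 28], [0, 22, 13, 15, 10], [24, 25, 12, 11, 10], [24, 5, 21, 18, 28]]),
          ((11, 16), [[0, 4, 9, 27, 29, 26, 14, 16], [0, 22, 13, 16], [24, 5, 21, 18, 28, 10, 11], [24, 25, 12, 11]]),
          ((14, 16), [[0, 4, 9, 27, 29, 26, 14], [0, 22, 13, 16], [24, 5, 21, 18, 28, 10, 15, 17, 14], [24, 25, 12, 11, 16]]),
          ((14, 26), [[0, 4, 9, 27, 29, 26], [0, 22, 13, 16, 14], [24, 5, 21, 18, 19, 26], [24, 25, 12, 17, 14]]),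
          ((18, 19), [[0, 22, 13, 15, 10, 28, 18], [0, 4, 3, 2, 7, 19], [24, 25, 12, 17, 14, 26, 19], [24, 5, 21, 18]]),
          ((18, 28), [[0, 22, 13, 15, 10, 28], [0, 4, 9, 27, 29, 28], [24, 25, 12, 17, 14, 26, 19, 18], [24, 5, 21, 18]]),
          ((19, 26), [[0, 22, 13, 16, 14, 26], [0, 4, 3, 2, 7, 19], [24, 25, 12, 11, 10, 28, 29, 26], [24, 5, 21, 18, 19]]),
          ((22, 23), [[0, 4, 3, 2, 1, 23], [0, 22], [24, 5, 21, 18, 28, 10, 15, 13, 22], [24, 25, 23]])]),
       ((1, 2), [
          ((0, 4), [[1, 23, 22, 0], [1, 6, 9, 4], [2, 7, 20, 21, 5, 24, 0], [2, 3, 4]]),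
          ((0, 22), [[1, 6, 8, 5, 24, 0], [1, 23, 22], [2, 7, 19, 26, 14, 16, 13, 22], [2, 3, 4, 0]]),
          ((3, 4), [[1, 23, 22, 0, 4], [1, 6, 8, 3], [2, 7, 20, 27, 9, 4], [2, 3]]),
          ((3, 8), [[1, 23, 22, 0, 4, 3], [1, 6, 8], [2, 7, 20, 21, 5, 8], [2, 3]]),
          ((6, 8), [[1, 23, 25, 24, 5, 8], [1, 6], [2, 7, 20, 27, 9, 6], [2, 3, 8]]),
          ((10, 11), [[1, 6, 9, 27, 29, 26, 14, 16, 11], [1, 23, 25, 12, 11], [2, 3, 4, 0, 22, 13, 15, 10], [2, 7, 19, 18, 28, 10]]),
          ((10, 28), [[1, 23, 22, 13, 15, 10], [1, 6, 9, 27, 29, 28], [2, 3, 4, 0, 24, 25, 12, 11, 10], [2, 7, 19, 18, 28]]),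
          ((11, 16), [[1, 6, 8, 5, 24, 25, 12, 11], [1, 23, 22, 13, 16], [2, 3, 4, 9, 27, 29, 28, 10, 11], [2, 7, 19, 26, 14, 16]]),
          ((14, 16), [[1, 6, 8, 5, 24, 25, 12, 11, 16], [1, 23, 22, 13, 16], [2, 3, 4, 9, 27, 29, 28, 10, 15, 17, 14], [2, 7, 19, 26, 14]]),
          ((14, 26), [[1, 23, 22, 13, 16, 14], [1, 6, 9, 27, 29, 26], [2, 3, 4, 0, 24, 25, 12, 17, 14], [2, 7, 19, 26]]),
          ((18, 19), [[1, 23, 22, 13, 15, 10, 28, 18], [1, 6, 8, 5, 21, 18], [2, 3, 4, 9, 27, 29, 26, 19], [2, 7, 19]]),
          ((18, 28), [[1, 23, 22, 13, 15, 10, 28], [1, 6, 8, 5, 21, 18], [2, 3, 4, 9, 27, 29, 28], [2, 7, 19, 18]]),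
          ((19, 26), [[1, 23, 22, 13, 16, 14, 26], [1, 6, 9, 27, 29, 26], [2, 3, 8, 5, 21, 18, 19], [2, 7, 19]]),
          ((22, 23), [[1, 6, 8, 5, 24, 25, 23], [1, 23], [2, 7, 19, 26, 14, 16, 13, 22], [2, 3, 4, 0, 22]])]),
       ((2, 3), [
          ((0, 4), [[2, 7, 19, 26, 14, 16, 13, 22, 0], [2, 1, 6, 9, 4], [3, 8, 5, 24, 0], [3, 4]]),
          ((0, 22), [[2, 7, 19, 26, 14, 16, 13, 22], [2, 1, 23, 22], [3, 8, 5, 24, 0], [3, 4, 0]]),
          ((1, 6), [[2, 7, 20, 21, 5, 24, 25, 23, 1], [2, 1], [3, 4, 9, 6], [3, 8, 6]]),
          ((1, 23), [[2, 7, 20, 21, 5, 24, 25, 23], [2, 1], [3, 4, 0, 22, 23], [3, 8, 6, 1]]),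
          ((6, 8), [[2, 7, 20, 21, 5, 8], [2, 1, 6], [3, 4, 9, 6], [3, 8]]),
          ((10, 11), [[2, 7, 19, 18, 28, 10], [2, 1, 23, 25, 12, 11], [3, 8, 6, 9, 27, 29, 26, 14, 16, 11], [3, 4, 0, 22, 13, 15, 10]]),
          ((10, 28), [[2, 1, 23, 22, 13, 15, 10], [2, 7, 19, 18, 28], [3, 8, 5, 24, 25, 12, 11, 10], [3, 4, 9, 27, 29, 28]]),
          ((11, 16), [[2, 7, 19, 26, 14, 16], [2, 1, 23, 22, 13, 16], [3, 8, 5, 21, 18, 28, 10, 11], [3, 4, 0, 24, 25, 12, 11]]),
          ((14, 16), [[2, 1, 23, 22, 13, 16], [2, 7, 19, 26, 14], [3, 8, 5, 21, 18, 28, 10, 15, 17, 14], [3, 4, 0, 24, 25, 12, 11, 16]]),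
          ((14, 26), [[2, 1, 23, 22, 13, 16, 14], [2, 7, 19, 26], [3, 8, 5, 24, 25, 12, 17, 14], [3, 4, 9, 27, 29, 26]]),
          ((18, 19), [[2, 1, 23, 22, 13, 15, 10, 28, 18], [2, 7, 19], [3, 4, 9, 27, 29, 26, 19], [3, 8, 5, 21, 18]]),
          ((18, 28), [[2, 1, 23, 22, 13, 15, 10, 28], [2, 7, 19, 18], [3, 4, 9, 27, 29, 28], [3, 8, 5, 21, 18]]),
          ((19, 26), [[2, 1, 23, 22, 13, 16, 14, 26], [2, 7, 19], [3, 8, 5, 21, 18, 19], [3, 4, 9, 27, 29, 26]]),
          ((22, 23), [[2, 7, 19, 26, 14, 16, 13, 22], [2, 1, 23], [3, 8, 5, 24, 25, 23], [3, 4, 0, 22]])]),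
       ((2, 7), [
          ((0, 4), [[2, 1, 6, 9, 4], [2, 3, 4], [7, 19, 26, 14, 16, 13, 22, 0], [7, 20, 21, 5, 24, 0]]),
          ((0, 22), [[2, 3, 4, 0], [2, 1, 23, 22], [7, 19, 26, 14, 16, 13, 22], [7, 20, 21, 5, 24, 0]]),
          ((1, 6), [[2, 3, 8, 6], [2, 1], [7, 19, 18, 21, 5, 24, 25, 23, 1], [7, 20, 27, 9, 6]]),
          ((1, 23), [[2, 3, 8, 6, 1], [2, 1], [7, 19, 26, 14, 16, 13, 22, 23], [7, 20, 21, 5, 24, 25, 23]]),
          ((3, 4), [[2, 1, 6, 8, 3], [2, 3], [7, 19, 18, 21, 5, 24, 0, 4], [7, 20, 27, 9, 4]]),
          ((3, 8), [[2, 1, 6, 8], [2, 3], [7, 19, 26, 29, 27, 9, 4, 3], [7, 20, 21, 5, 8]]),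
          ((6, 8), [[2, 3, 8], [2, 1, 6], [7, 19, 26, 29, 27, 9, 6], [7, 20, 21, 5, 8]]),
          ((10, 11), [[2, 3, 4, 0, 22, 13, 15, 10], [2, 1, 23, 25, 12, 11], [7, 20, 27, 29, 26, 14, 16, 11], [7, 19, 18, 28, 10]]),
          ((10, 28), [[2, 3, 4, 0, 24, 25, 12, 11, 10], [2, 1, 23, 22, 13, 15, 10], [7, 20, 27, 29, 28], [7, 19, 18, 28]]),
          ((11, 16), [[2, 3, 4, 0, 24, 25, 12, 11], [2, 1, 23, 22, 13, 16], [7, 20, 21, 18, 28, 10, 11], [7, 19, 26, 14, 16]]),
          ((14, 16), [[2, 3, 4, 0, 24, 25, 12, 17, 14], [2, 1, 23, 22, 13, 16], [7, 20, 21, 18, 28, 10, 11, 16], [7, 19, 26, 14]]),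
          ((14, 26), [[2, 3, 4, 0, 24, 25, 12, 17, 14], [2, 1, 23, 22, 13, 16, 14], [7, 20, 27, 29, 26], [7, 19, 26]]),
          ((18, 19), [[2, 3, 4, 0, 22, 13, 15, 10, 28, 18], [2, 1, 6, 9, 27, 29, 26, 19], [7, 20, 21, 18], [7, 19]]),
          ((18, 28), [[2, 3, 4, 0, 22, 13, 15, 10, 28], [2, 1, 6, 9, 27, 29, 28], [7, 20, 21, 18], [7, 19, 18]]),
          ((19, 26), [[2, 3, 4, 0, 22, 13, 16, 14, 26], [2, 1, 6, 9, 27, 29, 26], [7, 20, 21, 18, 19], [7, 19]]),
          ((22, 23), [[2, 3, 4, 0, 22], [2, 1, 23], [7, 20, 21, 5, 24, 25, 23], [7, 19, 26, 14, 16, 13, 22]])])]\<rparr>"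

lemma realises_if_certified:
  assumes "certified w \<and> map length (outer_cycle_lists w) = [a, b]"
  shows "\<exists>(V :: nat set) (E :: nat set set) T. snark V E \<and> hist V E T \<and> oc V E T = {#a, b#}"
  using certified_realises_oc[of w] assms by simp

lemma snark_5_5_certified: "certified snark_5_5 \<and> map length (outer_cycle_lists snark_5_5) = [5, 5]"
  by code_simp

lemma snark_5_6_certified: "certified snark_5_6 \<and> map length (outer_cycle_lists snark_5_6) = [5, 6]"
  by code_simp

lemma snark_5_7_certified: "certified snark_5_7 \<and> map length (outer_cycle_lists snark_5_7) = [5, 7]"
  by code_simp

lemma snark_5_8_certified: "certified snark_5_8 \<and> map length (outer_cycle_lists snark_5_8) = [5, 8]"
  by code_simp

lemma snark_6_6_certified: "certified snark_6_6 \<and> map length (outer_cycle_lists snark_6_6) = [6, 6]"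
  by code_simp

lemma snark_6_7_certified: "certified snark_6_7 \<and> map length (outer_cycle_lists snark_6_7) = [6, 7]"
  by code_simp

lemma snark_6_8_certified: "certified snark_6_8 \<and> map length (outer_cycle_lists snark_6_8) = [6, 8]"
  by code_simp

lemma snark_7_7_certified: "certified snark_7_7 \<and> map length (outer_cycle_lists snark_7_7) = [7, 7]"
  by code_simp

lemma snark_7_8_certified: "certified snark_7_8 \<and> map length (outer_cycle_lists snark_7_8) = [7, 8]"
  by code_simp

lemma snark_8_8_certified: "certified snark_8_8 \<and> map length (outer_cycle_lists snark_8_8) = [8, 8]"
  by code_simp

theorem lemma4:
  fixes x y :: nat
  assumes "x \<in> {5, 6, 7, 8}" and "y \<in> {5, 6, 7, 8}"
  shows "\<exists>(V :: nat set) (E :: nat set set) T.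
           snark V E \<and> hist V E T \<and> oc V E T = {#x, y#}"
proof -
  note realised =
    realises_if_certified[OF snark_5_5_certified]
    realises_if_certified[OF snark_5_6_certified]
    realises_if_certified[OF snark_5_7_certified]
    realises_if_certified[OF snark_5_8_certified]
    realises_if_certified[OF snark_6_6_certified]
    realises_if_certified[OF snark_6_7_certified]
    realises_if_certified[OF snark_6_8_certified]
    realises_if_certified[OF snark_7_7_certified]
    realises_if_certified[OF snark_7_8_certified]
    realises_if_certified[OF snark_8_8_certified]
  have ordered: "\<exists>(V :: nat set) (E :: nat set set) T. snark V E \<and> hist V E T \<and> oc V E T = {#a, b#}"
    if "a \<in> {5, 6, 7, 8}" "b \<in> {5, 6, 7, 8}" "a \<le> b" for a b
    using that realised by auto
  show ?thesis
  proof (cases "x \<le> y")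
    case True
    with assms show ?thesis
      by (rule ordered)
  next
    case False
    with assms ordered[of y x] show ?thesis
      by (simp add: add_mset_commute)
  qed
qed

end
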